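(* Fix an agent index $i$ and assume the prediction horizon satisfies $N_i \ge n_i$. Suppose the reference of agent $i$ evolves according to the exosystem $w_i(s+1) = S w_i(s)$ for all $s$, and that at each time $s$ at which $\mathbb{QP}_i(x_i(s),w_i(s))$ is feasible the applied input is $u_i(s) = \kappa_i(x_i(s),w_i(s))$. If $\mathbb{QP}_i(x_i(t),w_i(t))$ is feasible at time $t$, then: (i) (constraint satisfaction) $[x_i(t)^\top\ u_i(t)^\top]^\top \in \mathbb{Z}_i$; (ii) (recursive feasibility) $\mathbb{QP}_i(x_i(t+1),w_i(t+1))$ is feasible at time $t+1$; (iii) (asymptotic stability) if moreover $w_i(t) \in \mathcal{R}_\infty^i$, then the tracking error satisfies $e_i(s) = y_i(s) - Q_e w_i(s) \to \mathbf{0}$ as $s \to \infty$.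
   Context: Agent $i$: $x_i(t+1) = A_i x_i(t) + B_i u_i(t)$, $y_i(t) = C_i x_i(t)$, $t \in \{0,1,2,\dots\}$, with $x_i(t)\in\mathbb{R}^{n_i}$, $u_i(t)\in\mathbb{R}^{m_i}$, $y_i(t)\in\mathbb{R}^q$, subject to the constraint $[x_i(t)^\top\ u_i(t)^\top]^\top \in \mathbb{Z}_i$. Standing assumptions: $(A_i,B_i)$ is controllable; $\mathbb{Z}_i$ is a polytope containing the origin in its interior; $K_i$ is a fixed matrix such that $A_i^{c} := A_i + B_i K_i$ is Schur. Exosystem: $S\in\mathbb{R}^{p\times p}$, $Q_e\in\mathbb{R}^{q\times p}$ with $S^\rho = I$ for some positive integer $\rho$, and for every eigenvalue $\lambda$ of $S$ the matrix $\begin{bmatrix} A_i-\lambda I & B_i\\ C_i & \mathbf{0}\end{bmatrix}$ has full row rank. $\Pi_i,\Gamma_i$ are matrices with $A_i\Pi_i + B_i\Gamma_i = \Pi_i S$ and $C_i\Pi_i = Q_e$, and $L_i := \Gamma_i - K_i\Pi_i$. The reference is $w_i(t)\in\mathbb{R}^p$ and $e_i(t) = y_i(t) - Q_e w_i(t)$. Admissible sets: fix $\epsilon_i\in(0,1)$. $\mathcal{O}_\infty^i$ is the set of $(x,w)\in\mathbb{R}^{n_i}\times\mathbb{R}^p$ such that the sequence $x(0)=x$, $w(0)=w$, $x(k+1) = A_i^c x(k) + B_i L_i w(k)$, $w(k+1) = S w(k)$ satisfies $[x(k)^\top\ (K_i x(k) + L_i w(k))^\top]^\top \in (1-\epsilon_i)\mathbb{Z}_i$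 for all $k\ge 0$. $\mathcal{R}_\infty^i = \{w : \exists x \text{ with } [x^\top\ w^\top]^\top \in \mathcal{O}_\infty^i\}$. Weights: $T_i = \sum_{k=1}^{\rho}(S^k)^\top T_i^0 S^k$ with $T_i^0$ symmetric positive definite; $Q_i, R_i$ symmetric positive definite; $P_i$ is the (positive definite) solution of $(A_i^c)^\top P_i A_i^c - P_i + Q_i = \mathbf{0}$. $\|z\|_T^2 = z^\top T z$. MPC problem $\mathbb{QP}_i(x_i(t),w_i(t))$: decision variables $\bar w_i(0|t)\in\mathbb{R}^p$ and $v_i(k|t)\in\mathbb{R}^{m_i}$, $k=0,\dots,N_i-1$; predictions $x_i(0|t) = x_i(t)$, $x_i(k+1|t) = A_i^c x_i(k|t) + B_i L_i \bar w_i(k|t) + B_i v_i(k|t)$, $\bar w_i(k+1|t) = S\bar w_i(k|t)$; constraints $[x_i(k|t)^\top\ (K_i x_i(k|t) + L_i\bar w_i(k|t) + v_i(k|t))^\top]^\top\in\mathbb{Z}_i$ for $k=0,\dots,N_i-1$, and $[x_i(N_i|t)^\top\ \bar w_i(N_i|t)^\top]^\top\in\mathcal{O}_\infty^i$; cost $J_i = \|\bar w_i(0|t)-w_i(t)\|_{T_i}^2 + \sum_{k=0}^{N_i-1}\|x_i(k|t)-\Pi_i\bar w_i(k|t)\|_{Q_i}^2 + \sum_{k=0}^{N_i-1}\|v_i(k|t)\|_{R_i}^2 + \|x_i(N_i|t)-\Pi_i\bar w_i(N_i|t)\|_{P_i}^2$, to be minimized. With optimizer $\bar w_i^*(0|t),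 v_i^*(0|t)$, the MPC control law is $\kappa_i(x_i(t),w_i(t)) = K_i x_i(t) + L_i\bar w_i^*(0|t) + v_i^*(0|t)$. *)

theory Defs
  imports "HOL-Analysis.Analysis"
begin

primrec mpow :: "'a::comm_ring_1^'n^'n \<Rightarrow> nat \<Rightarrow> 'a^'n^'n" where
  "mpow M 0 = mat 1"
| "mpow M (Suc k) = M ** mpow M k"

definition cmat :: "real^'c^'r \<Rightarrow> complex^'c^'r" where
  "cmat M = (\<chi> i j. complex_of_real (M $ i $ j))"

definition is_eigenvalue :: "real^'n^'n \<Rightarrow> complex \<Rightarrow> bool" where
  "is_eigenvalue M mu \<longleftrightarrow> (\<exists>v::complex^'n. v \<noteq> 0 \<and> cmat M *v v = mu *s v)"

definition schur :: "real^'n^'n \<Rightarrow> bool" where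
  "schur M \<longleftrightarrow> (\<forall>mu. is_eigenvalue M mu \<longrightarrow> cmod mu < 1)"

text \<open>Controllability of (A,B): the columns of [B, AB, ..., A^(n-1) B] span R^n
  (i.e. the controllability matrix has full rank n).\<close>
definition controllable :: "real^'n^'n \<Rightarrow> real^'m^'n \<Rightarrow> bool" where
  "controllable A B \<longleftrightarrow>
     span (\<Union>k<CARD('n). range (\<lambda>u. mpow A k *v (B *v u))) = (UNIV :: (real^'n) set)"

definition sym_pos_def :: "real^'n^'n \<Rightarrow> bool" where
  "sym_pos_def M \<longleftrightarrow> transpose M = M \<and> (\<forall>x. x \<noteq> 0 \<longrightarrow> x \<bullet> (M *v x) > 0)"

definition qnorm2 :: "real^'n^'n \<Rightarrow> real^'n \<Rightarrow> real" where
  "qnorm2 T z = z \<bullet> (T *v z)"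

text \<open>The block matrix [A - lambda I, B; C, 0] (complex, (n+q) x (n+m)).\<close>
definition hautus_matrix ::
  "real^'n^'n \<Rightarrow> real^'m^'n \<Rightarrow> real^'n^'q \<Rightarrow> complex \<Rightarrow> complex^('n+'m)^('n+'q)" where
  "hautus_matrix A B C mu = (\<chi> r c.
     (case r of
        Inl i \<Rightarrow> (case c of Inl j \<Rightarrow> complex_of_real (A $ i $ j) - (if i = j then mu else 0)
                          | Inr j \<Rightarrow> complex_of_real (B $ i $ j))
      | Inr i \<Rightarrow> (case c of Inl j \<Rightarrow> complex_of_real (C $ i $ j)
                          | Inr j \<Rightarrow> 0)))"

primrec cl_state :: "real^'n^'n \<Rightarrow> real^'m^'n \<Rightarrow> real^'p^'m \<Rightarrow> real^'p^'p
     \<Rightarrow> real^'n \<Rightarrow> real^'p \<Rightarrow> nat \<Rightarrow> real^'n" where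
  "cl_state Ac B L S x w 0 = x"
| "cl_state Ac B L S x w (Suc k) =
     Ac *v cl_state Ac B L S x w k + B *v (L *v (mpow S k *v w))"

definition O_inf :: "real^'n^'n \<Rightarrow> real^'m^'n \<Rightarrow> real^'n^'m \<Rightarrow> real^'p^'m \<Rightarrow> real^'p^'p
     \<Rightarrow> real \<Rightarrow> ((real^'n) \<times> (real^'m)) set \<Rightarrow> ((real^'n) \<times> (real^'p)) set" where
  "O_inf A B K L S \<epsilon> Z = {(x, w). \<forall>k.
      (cl_state (A + B ** K) B L S x w k,
       K *v cl_state (A + B ** K) B L S x w k + L *v (mpow S k *v w))
      \<in> (\<lambda>z. (1 - \<epsilon>) *\<^sub>R z) ` Z}"

definition R_inf :: "real^'n^'n \<Rightarrow> real^'m^'n \<Rightarrow> real^'n^'m \<Rightarrow> real^'p^'m \<Rightarrow> real^'p^'p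
     \<Rightarrow> real \<Rightarrow> ((real^'n) \<times> (real^'m)) set \<Rightarrow> (real^'p) set" where
  "R_inf A B K L S \<epsilon> Z = {w. \<exists>x. (x, w) \<in> O_inf A B K L S \<epsilon> Z}"

text \<open>Predicted state x(k|t) given decision variables wb0 = wbar(0|t) and v(k|t).\<close>
primrec pred_state :: "real^'n^'n \<Rightarrow> real^'m^'n \<Rightarrow> real^'p^'m \<Rightarrow> real^'p^'p
     \<Rightarrow> real^'n \<Rightarrow> real^'p \<Rightarrow> (nat \<Rightarrow> real^'m) \<Rightarrow> nat \<Rightarrow> real^'n" where
  "pred_state Ac B L S x wb0 v 0 = x"
| "pred_state Ac B L S x wb0 v (Suc k) =
     Ac *v pred_state Ac B L S x wb0 v k + B *v (L *v (mpow S k *v wb0)) + B *v v k"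

definition qp_feasible_for ::
  "real^'n^'n \<Rightarrow> real^'m^'n \<Rightarrow> real^'n^'m \<Rightarrow> real^'p^'m \<Rightarrow> real^'p^'p
   \<Rightarrow> real \<Rightarrow> ((real^'n) \<times> (real^'m)) set \<Rightarrow> nat
   \<Rightarrow> real^'n \<Rightarrow> real^'p \<Rightarrow> (nat \<Rightarrow> real^'m) \<Rightarrow> bool" where
  "qp_feasible_for A B K L S \<epsilon> Z N x wb0 v \<longleftrightarrow>
     (\<forall>k<N. (pred_state (A + B ** K) B L S x wb0 v k,
             K *v pred_state (A + B ** K) B L S x wb0 v k + L *v (mpow S k *v wb0) + v k) \<in> Z)
   \<and> (pred_state (A + B ** K) B L S x wb0 v N, mpow S N *v wb0) \<in> O_inf A B K L S \<epsilon> Z"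

definition qp_feasible ::
  "real^'n^'n \<Rightarrow> real^'m^'n \<Rightarrow> real^'n^'m \<Rightarrow> real^'p^'m \<Rightarrow> real^'p^'p
   \<Rightarrow> real \<Rightarrow> ((real^'n) \<times> (real^'m)) set \<Rightarrow> nat \<Rightarrow> real^'n \<Rightarrow> real^'p \<Rightarrow> bool" where
  "qp_feasible A B K L S \<epsilon> Z N x w \<longleftrightarrow> (\<exists>wb0 v. qp_feasible_for A B K L S \<epsilon> Z N x wb0 v)"

definition qp_cost ::
  "real^'n^'n \<Rightarrow> real^'m^'n \<Rightarrow> real^'n^'m \<Rightarrow> real^'p^'m \<Rightarrow> real^'p^'p \<Rightarrow> real^'p^'n
   \<Rightarrow> real^'p^'p \<Rightarrow> real^'n^'n \<Rightarrow> real^'m^'m \<Rightarrow> real^'n^'n \<Rightarrow> nat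
   \<Rightarrow> real^'n \<Rightarrow> real^'p \<Rightarrow> real^'p \<Rightarrow> (nat \<Rightarrow> real^'m) \<Rightarrow> real" where
  "qp_cost A B K L S Pim T Q R P N x w wb0 v =
     qnorm2 T (wb0 - w)
   + (\<Sum>k<N. qnorm2 Q (pred_state (A + B ** K) B L S x wb0 v k - Pim *v (mpow S k *v wb0)))
   + (\<Sum>k<N. qnorm2 R (v k))
   + qnorm2 P (pred_state (A + B ** K) B L S x wb0 v N - Pim *v (mpow S N *v wb0))"

definition qp_optimal ::
  "real^'n^'n \<Rightarrow> real^'m^'n \<Rightarrow> real^'n^'m \<Rightarrow> real^'p^'m \<Rightarrow> real^'p^'p \<Rightarrow> real^'p^'n
   \<Rightarrow> real^'p^'p \<Rightarrow> real^'n^'n \<Rightarrow> real^'m^'m \<Rightarrow> real^'n^'n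
   \<Rightarrow> real \<Rightarrow> ((real^'n) \<times> (real^'m)) set \<Rightarrow> nat
   \<Rightarrow> real^'n \<Rightarrow> real^'p \<Rightarrow> real^'p \<Rightarrow> (nat \<Rightarrow> real^'m) \<Rightarrow> bool" where
  "qp_optimal A B K L S Pim T Q R P \<epsilon> Z N x w wb0 v \<longleftrightarrow>
     qp_feasible_for A B K L S \<epsilon> Z N x wb0 v \<and>
     (\<forall>wb0' v'. qp_feasible_for A B K L S \<epsilon> Z N x wb0' v' \<longrightarrow>
        qp_cost A B K L S Pim T Q R P N x w wb0 v \<le> qp_cost A B K L S Pim T Q R P N x w wb0' v')"

end

theory Submission
  imports Defs
begin

text \<open>
  Writing a predicted state as \<open>Pim S\<^sup>k wb + z\<^sub>k\<close> separates the steady state generated by the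
  artificial reference \<open>wb\<close> from a deviation obeying \<open>z\<^sub>k\<^sub>+\<^sub>1 = Ac z\<^sub>k + B v\<^sub>k\<close>.
  Shifting an optimal solution by one step (\<open>S wb\<close>, the inputs shifted and padded with \<open>0\<close>)
  is feasible again, since the terminal set is invariant, and costs less by the first stage cost,
  since \<open>T\<close> is \<open>S\<close>-invariant and the Lyapunov equation absorbs the last stage.
  Summing these decreases, the deviation \<open>x - Pim wb\<close> of the closed loop tends to \<open>0\<close>.
  For the offset \<open>wb - w\<close>, move \<open>wb\<close> a fixed fraction towards \<open>w\<close> and steer the new deviation
  to \<open>0\<close> in \<open>n\<close> steps by a linear deadbeat control (controllability): for small deviations this
  candidate is feasible and its cost beats the optimum unless
  \<open>\<parallel>wb - w\<parallel>\<^sub>T\<^sup>2 = O(\<parallel>x - Pim wb\<parallel>\<^sup>2)\<close>.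
  The candidate needs the true steady state to satisfy the tightened constraints. This follows
  from \<open>w \<in> R\<^sub>\<infinity>\<close> by averaging the admissible orbit: the Cesaro means of \<open>Ac\<^sup>k d\<close> along
  multiples of the period tend to \<open>0\<close> because the Schur matrix \<open>Ac\<^sup>\<rho>\<close> has no nonzero fixed point.
\<close>

lemma mpow_Suc_right: "mpow M (Suc k) = mpow M k ** M"
  by (induction k) (simp_all add: matrix_mul_assoc)

lemma mpow_add: "mpow M (a + b) = mpow M a ** mpow M b"
  by (induction a) (simp_all add: matrix_mul_assoc)

lemma mpow_mult: "mpow M (a * b) = mpow (mpow M a) b"
  by (induction b) (simp_all add: mpow_add)

lemma mpow_periodic:
  fixes M :: "'a::comm_ring_1^'n^'n"
  assumes "mpow M \<rho> = mat 1"
  shows "mpow M (k + \<rho> * j) = mpow M k"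
proof -
  have "mpow (mat 1) j = (mat 1 :: 'a::comm_ring_1^'n^'n)" by (induction j) simp_all
  then show ?thesis by (simp add: mpow_add mpow_mult assms)
qed

lemma mpow_mult_vec_Suc: "mpow M k *v (M *v x) = mpow M (Suc k) *v x"
  by (metis mpow_Suc_right matrix_vector_mul_assoc)

lemma mult_vec_mpow_Suc: "M *v (mpow M k *v x) = mpow M (Suc k) *v x"
  by (simp add: matrix_vector_mul_assoc)

lemma mpow_mult_vec_add: "mpow M a *v (mpow M b *v x) = mpow M (a + b) *v x"
  by (simp add: mpow_add matrix_vector_mul_assoc)

section \<open>Input-driven trajectories and deadbeat control\<close>

primrec traj :: "real^'n^'n \<Rightarrow> real^'m^'n \<Rightarrow> real^'n \<Rightarrow> (nat \<Rightarrow> real^'m) \<Rightarrow> nat \<Rightarrow> real^'n"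
  where
    "traj M B z v 0 = z"
  | "traj M B z v (Suc k) = M *v traj M B z v k + B *v v k"

lemma traj_zero_input: "traj M B z (\<lambda>_. 0) k = mpow M k *v z"
  by (induction k) (simp_all add: matrix_vector_mul_assoc)

lemma traj_add: "traj M B (z1 + z2) (\<lambda>k. v1 k + v2 k) k = traj M B z1 v1 k + traj M B z2 v2 k"
  by (induction k) (simp_all add: algebra_simps)

lemma traj_scaleR: "traj M B (c *\<^sub>R z) (\<lambda>k. c *\<^sub>R v k) k = c *\<^sub>R traj M B z v k"
  by (induction k) (simp_all add: algebra_simps)

lemma traj_cong: "(\<And>j. j < k \<Longrightarrow> v j = v' j) \<Longrightarrow> traj M B z v k = traj M B z v' k"
  by (induction k) auto

lemma traj_Suc_shift: "traj M B (traj M B z v 1) (\<lambda>k. v (Suc k)) k = traj M B z v (Suc k)"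
  by (induction k) auto

lemma traj_feedback: "traj A B z u k = traj (A + B ** K) B z (\<lambda>j. u j - K *v traj A B z u j) k"
  by (induction k)
     (simp_all add: matrix_vector_mult_add_rdistrib matrix_vector_mul_assoc[symmetric] algebra_simps)

lemma traj_impulse: "traj A B 0 (\<lambda>j. if j = i then u else 0) (Suc i + d) = mpow A d *v (B *v u)"
proof -
  have "traj A B 0 (\<lambda>j. if j = i then u else 0) j = 0" if "j \<le> i" for j
    using that by (induction j) auto
  then show ?thesis
    by (induction d) (simp_all add: matrix_vector_mul_assoc matrix_mul_assoc)
qed

lemma linear_traj:
  assumes "\<And>k. linear (\<lambda>z. D z k)"
  shows "linear (\<lambda>z. traj M B z (D z) k)"
proof (rule linearI)
  fix z1 z2
  have "D (z1 + z2) = (\<lambda>k. D z1 k + D z2 k)"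
    using linear_add[OF assms] by auto
  then show "traj M B (z1 + z2) (D (z1 + z2)) k = traj M B z1 (D z1) k + traj M B z2 (D z2) k"
    by (simp add: traj_add)
next
  fix c z
  have "D (c *\<^sub>R z) = (\<lambda>k. c *\<^sub>R D z k)"
    using linear_scale[OF assms] by auto
  then show "traj M B (c *\<^sub>R z) (D (c *\<^sub>R z)) k = c *\<^sub>R traj M B z (D z) k"
    by (simp add: traj_scaleR)
qed

lemma subspace_reachable: "subspace (range (\<lambda>u. traj A B 0 u n))"
proof (unfold subspace_def, intro conjI ballI allI)
  show "0 \<in> range (\<lambda>u. traj A B 0 u n)"
    by (rule range_eqI[where x = "\<lambda>_. 0"]) (simp add: traj_zero_input)
next
  fix y1 y2 assume "y1 \<in> range (\<lambda>u. traj A B 0 u n)" "y2 \<in> range (\<lambda>u. traj A B 0 u n)"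
  then obtain u1 u2 where "y1 = traj A B 0 u1 n" "y2 = traj A B 0 u2 n" by blast
  then show "y1 + y2 \<in> range (\<lambda>u. traj A B 0 u n)"
    by (intro range_eqI[where x = "\<lambda>k. u1 k + u2 k"]) (simp add: traj_add[of A B 0 0, simplified])
next
  fix c y assume "y \<in> range (\<lambda>u. traj A B 0 u n)"
  then obtain u1 where "y = traj A B 0 u1 n" by blast
  then show "c *\<^sub>R y \<in> range (\<lambda>u. traj A B 0 u n)"
    by (intro range_eqI[where x = "\<lambda>k. c *\<^sub>R u1 k"]) (simp add: traj_scaleR[of A B c 0, simplified])
qed

lemma controllable_reachable:
  assumes "controllable A (B::real^'m^'n)"
  obtains u where "traj A B 0 u CARD('n) = y"
proof -
  let ?n = "CARD('n)"
  have "(\<Union>k<?n. range (\<lambda>u. mpow A k *v (B *v u))) \<subseteq> range (\<lambda>u. traj A B 0 u ?n)"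
  proof safe
    fix k u assume "k < ?n"
    then have "Suc (?n - 1 - k) + k = ?n" by simp
    then have "mpow A k *v (B *v u) = traj A B 0 (\<lambda>j. if j = ?n - 1 - k then u else 0) ?n"
      using traj_impulse[of A B "?n - 1 - k" u k] by simp
    then show "mpow A k *v (B *v u) \<in> range (\<lambda>u. traj A B 0 u ?n)" by blast
  qed
  with span_minimal[OF _ subspace_reachable] assms have "y \<in> range (\<lambda>u. traj A B 0 u ?n)"
    unfolding controllable_def by blast
  with that show ?thesis by blast
qed

text \<open>Reach \<open>-Ac\<^sup>n z\<close> from \<open>0\<close> with the open-loop system, translate the inputs to the feedback
  loop, add the free response from \<open>z\<close>, and switch the input off after \<open>n\<close> steps.\<close>
lemma controllable_deadbeat:
  assumes "controllable A (B::real^'m^'n)"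
  obtains v where "\<And>k. CARD('n) \<le> k \<Longrightarrow> traj (A + B ** K) B z v k = 0"
proof -
  let ?n = "CARD('n)" and ?Ac = "A + B ** K"
  obtain u where u: "traj A B 0 u ?n = - (mpow ?Ac ?n *v z)"
    using controllable_reachable[OF assms] by blast
  define v0 where "v0 = (\<lambda>j. u j - K *v traj A B 0 u j)"
  have "traj ?Ac B 0 v0 ?n = - (mpow ?Ac ?n *v z)"
    using traj_feedback[of A B 0 u ?n K] u by (simp add: v0_def)
  then have "traj ?Ac B (z + 0) (\<lambda>k. 0 + v0 k) ?n = 0"
    unfolding traj_add traj_zero_input by simp
  then have n0: "traj ?Ac B z v0 ?n = 0" by simp
  define v where "v k = (if k < ?n then v0 k else 0)" for k
  have "traj ?Ac B z v ?n = traj ?Ac B z v0 ?n"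
    by (rule traj_cong) (simp add: v_def)
  then have vanish: "traj ?Ac B z v (?n + d) = 0" for d
    using n0 by (induction d) (simp_all add: v_def)
  show ?thesis
  proof (rule that)
    fix k assume "?n \<le> k"
    then obtain d where "k = ?n + d" using le_Suc_ex by blast
    then show "traj ?Ac B z v k = 0" by (simp add: vanish)
  qed
qed

lemma controllable_linear_deadbeat:
  assumes "controllable A (B::real^'m^'n)"
  obtains D where "\<And>k. linear (\<lambda>z. D z k)"
    and "\<And>z k. CARD('n) \<le> k \<Longrightarrow> traj (A + B ** K) B z (D z) k = 0"
proof -
  let ?Ac = "A + B ** K"
  have "\<exists>v. \<forall>k. CARD('n) \<le> k \<longrightarrow> traj ?Ac B (axis i 1) v k = 0" for i
    by (rule controllable_deadbeat[OF assms, of K "axis i 1"]) blast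
  then obtain V where V: "\<And>i k. CARD('n) \<le> k \<Longrightarrow> traj ?Ac B (axis i 1) (V i) k = 0"
    by metis
  define D where "D z k = (\<Sum>i\<in>UNIV. z $ i *\<^sub>R V i k)" for z :: "real^'n" and k
  have lin: "linear (\<lambda>z. D z k)" for k
    unfolding D_def by (rule linearI) (simp_all add: scaleR_add_left sum.distrib scaleR_sum_right)
  have deadbeat: "traj ?Ac B z (D z) k = 0" if "CARD('n) \<le> k" for z k
  proof -
    have "(\<lambda>z. traj ?Ac B z (D z) k) = (\<lambda>z. 0)"
    proof (rule linear_eq_stdbasis[OF linear_traj[OF lin] linear_zero])
      fix b :: "real^'n" assume "b \<in> Basis"
      then obtain i where b: "b = axis i 1" by (auto simp: Basis_vec_def)
      have "D b = V i"
        by (simp add: D_def b axis_def fun_eq_iff if_distrib[of "\<lambda>c. c *\<^sub>R _"] cong: if_cong)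
      then show "traj ?Ac B b (D b) k = 0" using V[OF that] b by simp
    qed
    from fun_cong[OF this, of z] show ?thesis by simp
  qed
  show ?thesis by (rule that[OF lin deadbeat])
qed

lemma linear_family_bounded:
  fixes f :: "nat \<Rightarrow> 'a::euclidean_space \<Rightarrow> 'b::real_normed_vector"
  assumes "\<And>k. linear (f k)"
  obtains c where "c > 0" and "\<And>k z. k \<le> N \<Longrightarrow> norm (f k z) \<le> c * norm z"
proof -
  have "\<forall>k. \<exists>b>0. \<forall>z. norm (f k z) \<le> b * norm z"
    using linear_bounded_pos[OF assms] by blast
  then obtain b where b: "\<And>k. b k > 0" "\<And>k z. norm (f k z) \<le> b k * norm z"
    by metis
  define c where "c = (\<Sum>k\<le>N. b k)"
  have "norm (f k z) \<le> c * norm z" if "k \<le> N" for k z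
  proof -
    have "b k \<le> c"
      unfolding c_def using that b(1) by (intro member_le_sum) (auto intro: less_imp_le)
    then show ?thesis
      using b(2)[of k z] mult_right_mono[of "b k" c "norm z"] by simp
  qed
  moreover have "c > 0" unfolding c_def using b(1) by (intro sum_pos) auto
  ultimately show ?thesis using that by blast
qed

lemma controllable_bounded_deadbeat:
  assumes "controllable A (B::real^'m^'n)" and "CARD('n) \<le> N"
  obtains c D where "c > 0" and "\<And>z. traj (A + B ** K) B z (D z) N = 0"
    and "\<And>z k. k \<le> N \<Longrightarrow> norm (traj (A + B ** K) B z (D z) k) \<le> c * norm z"
    and "\<And>z k. k \<le> N \<Longrightarrow> norm (D z k) \<le> c * norm z"
proof -
  obtain D where lin: "\<And>k. linear (\<lambda>z. D z k)"
    and dead: "\<And>z k. CARD('n) \<le> k \<Longrightarrow> traj (A + B ** K) B z (D z) k = 0"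
    using controllable_linear_deadbeat[OF assms(1)] by blast
  have "linear (\<lambda>z. (traj (A + B ** K) B z (D z) k, D z k))" for k
    using linear_traj[OF lin] lin
    by (simp add: linear_conv_bounded_linear bounded_linear_Pair)
  then obtain c where c_pos: "c > 0"
    and c: "\<And>k z. k \<le> N \<Longrightarrow> norm (traj (A + B ** K) B z (D z) k, D z k) \<le> c * norm z"
    using linear_family_bounded[of "\<lambda>k z. (traj (A + B ** K) B z (D z) k, D z k)" N] by blast
  have "norm (traj (A + B ** K) B z (D z) k) \<le> c * norm z" if "k \<le> N" for z k
    by (rule order_trans[OF norm_fst_le c[OF that]])
  moreover have "norm (D z k) \<le> c * norm z" if "k \<le> N" for z k
    by (rule order_trans[OF norm_snd_le c[OF that]])
  ultimately show ?thesis
    by (rule that[OF c_pos dead[OF assms(2)]])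
qed

section \<open>Periodic points of Schur matrices\<close>

definition cvec :: "real^'n \<Rightarrow> complex^'n" where
  "cvec y = (\<chi> i. complex_of_real (y $ i))"

lemma cmat_mult_cvec: "cmat M *v cvec y = cvec (M *v y)"
  by (simp add: cmat_def cvec_def matrix_vector_mult_def vec_eq_iff)

lemma cvec_eq_0_iff: "cvec y = 0 \<longleftrightarrow> y = 0"
  by (simp add: cvec_def vec_eq_iff)

lemma matrix_vector_mult_sum: "(M::'a::comm_semiring_1^'n^'m) *v sum f I = (\<Sum>i\<in>I. M *v f i)"
  by (simp add: matrix_vector_mult_def vec_eq_iff sum_distrib_left sum.swap[of _ I] sum_component)

lemma sum_smult_vec: "(\<Sum>i\<in>I. c i *s (v::'a::semiring_1^'n)) = (\<Sum>i\<in>I. c i) *s v"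
  by (simp add: vec_eq_iff sum_distrib_right sum_component)

lemma cis_root_power_ne_1:
  assumes "0 < j" "j < \<rho>"
  shows "cis (2 * pi / real \<rho>) ^ j \<noteq> 1"
proof
  assume "cis (2 * pi / real \<rho>) ^ j = 1"
  moreover have "2 * pi * real j / real \<rho> = real j * (2 * pi / real \<rho>)" by simp
  ultimately have "cis (2 * pi * real j / real \<rho>) = cis (2 * pi * real 0 / real \<rho>)"
    by (simp only: Complex.DeMoivre) simp
  with Complex.bij_betw_roots_unity[of \<rho>] assms have "j = 0"
    by (auto simp: bij_betw_def inj_on_def)
  with assms show False by simp
qed

lemma cis_root_power_pow:
  assumes "\<rho> > 0"
  shows "(cis (2 * pi / real \<rho>) ^ j) ^ \<rho> = 1"
proof -
  have "(cis (2 * pi / real \<rho>) ^ j) ^ \<rho> = cis (real \<rho> * (real j * (2 * pi / real \<rho>)))"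
    by (simp only: Complex.DeMoivre)
  also have "real \<rho> * (real j * (2 * pi / real \<rho>)) = 2 * pi * real j"
    using assms by (simp add: field_simps)
  finally show ?thesis by simp
qed

lemma sum_powers_cis_root:
  assumes "\<rho> > 0" "j < \<rho>"
  shows "(\<Sum>k<\<rho>. (cis (2 * pi / real \<rho>) ^ j) ^ k) = (if j = 0 then of_nat \<rho> else 0)"
  using cis_root_power_ne_1[of j \<rho>] cis_root_power_pow[OF assms(1)] assms(2)
  by (simp add: sum_gp_strict)

definition orbit_dft :: "real^'n^'n \<Rightarrow> nat \<Rightarrow> real^'n \<Rightarrow> nat \<Rightarrow> complex^'n" where
  "orbit_dft M \<rho> y k = (\<Sum>j<\<rho>. ((cis (2 * pi / real \<rho>) ^ k) ^ j) *s cvec (mpow M j *v y))"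

lemma orbit_dft_eigen:
  assumes "\<rho> > 0" and "mpow M \<rho> *v y = y"
  shows "cmat M *v orbit_dft M \<rho> y k = inverse (cis (2 * pi / real \<rho>) ^ k) *s orbit_dft M \<rho> y k"
proof -
  let ?\<omega> = "cis (2 * pi / real \<rho>)"
  define f where "f j = ((?\<omega> ^ k) ^ j) *s cvec (mpow M j *v y)" for j
  obtain m where m: "\<rho> = Suc m" using assms(1) by (cases \<rho>) auto
  have "(?\<omega> ^ k) *s (cmat M *v orbit_dft M \<rho> y k) = (\<Sum>j<\<rho>. f (Suc j))"
    unfolding orbit_dft_def f_def
    by (simp add: matrix_vector_mult_sum cmat_mult_cvec matrix_vector_mul_assoc
        vector_scalar_commute sum_cmul[symmetric] vector_smult_assoc)
  also have "\<dots> = (\<Sum>j<m. f (Suc j)) + f \<rho>"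
    by (simp add: m)
  also have "f \<rho> = f 0"
    using cis_root_power_pow[OF assms(1), of k] assms(2) by (simp add: f_def)
  also have "(\<Sum>j<m. f (Suc j)) + f 0 = orbit_dft M \<rho> y k"
    by (simp only: orbit_dft_def f_def m sum.lessThan_Suc_shift add.commute)
  finally have "(?\<omega> ^ k) *s (cmat M *v orbit_dft M \<rho> y k) = orbit_dft M \<rho> y k" .
  from arg_cong[OF this, of "\<lambda>v. inverse (?\<omega> ^ k) *s v"] show ?thesis
    by (simp add: vector_smult_assoc)
qed

lemma sum_orbit_dft:
  assumes "\<rho> > 0"
  shows "(\<Sum>k<\<rho>. orbit_dft M \<rho> y k) = of_nat \<rho> *s cvec y"
proof -
  obtain m where m: "\<rho> = Suc m" using assms by (cases \<rho>) auto
  have "(\<Sum>k<\<rho>. orbit_dft M \<rho> y k)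
      = (\<Sum>j<\<rho>. (\<Sum>k<\<rho>. (cis (2 * pi / real \<rho>) ^ j) ^ k) *s cvec (mpow M j *v y))"
    unfolding orbit_dft_def
    by (subst sum.swap) (simp add: sum_smult_vec power_mult[symmetric] mult.commute)
  also have "\<dots> = (\<Sum>j<\<rho>. (if j = 0 then of_nat \<rho> else 0) *s cvec (mpow M j *v y))"
    by (rule sum.cong) (simp_all add: sum_powers_cis_root[OF assms])
  also have "\<dots> = of_nat \<rho> *s cvec y"
    by (simp only: m sum.lessThan_Suc_shift) simp
  finally show ?thesis .
qed

text \<open>If \<open>M\<^sup>\<rho> y = y \<noteq> 0\<close>, some Fourier coefficient of the orbit is nonzero, hence an
  eigenvector of \<open>M\<close> for an eigenvalue on the unit circle.\<close>
lemma schur_no_periodic_point: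
  assumes "schur M" and "\<rho> > 0" and "mpow M \<rho> *v y = y"
  shows "y = 0"
proof (rule ccontr)
  assume "y \<noteq> 0"
  then have "(\<Sum>k<\<rho>. orbit_dft M \<rho> y k) \<noteq> 0"
    using assms(2) by (simp add: sum_orbit_dft cvec_eq_0_iff)
  then obtain k where "orbit_dft M \<rho> y k \<noteq> 0" by (meson sum.neutral)
  then have "is_eigenvalue M (inverse (cis (2 * pi / real \<rho>) ^ k))"
    unfolding is_eigenvalue_def using orbit_dft_eigen[OF assms(2,3)] by blast
  moreover have "cmod (inverse (cis (2 * pi / real \<rho>) ^ k)) = 1"
    by (simp add: norm_inverse norm_power)
  ultimately show False using assms(1) unfolding schur_def by fastforce
qed

lemma tendsto_zero_if_norm_sq_le:
  assumes "m > 0" and "\<And>j. m * (norm (z j))\<^sup>2 \<le> q j" and "q \<longlonglongrightarrow> 0"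
  shows "z \<longlonglongrightarrow> 0"
proof -
  have "(\<lambda>j. sqrt (q j / m)) \<longlonglongrightarrow> sqrt (0 / m)"
    by (intro tendsto_real_sqrt tendsto_divide tendsto_const assms(3)) (use assms(1) in simp)
  then have lim: "(\<lambda>j. sqrt (q j / m)) \<longlonglongrightarrow> 0" by simp
  have "\<forall>j. norm (z j) \<le> sqrt (q j / m)"
    using assms(1,2) by (intro allI real_le_rsqrt) (simp add: field_simps mult.commute)
  from always_eventually[OF this] lim show ?thesis by (rule Lim_null_comparison)
qed

lemma decrease_summable_tendsto_zero:
  fixes V g :: "nat \<Rightarrow> real"
  assumes "\<And>j. V (Suc j) + g j \<le> V j" and "\<And>j. 0 \<le> V j" and "\<And>j. 0 \<le> g j"
  shows "g \<longlonglongrightarrow> 0"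
proof -
  have partial: "(\<Sum>i<n. g i) \<le> V 0 - V n" for n
  proof (induction n)
    case 0 show ?case by simp
  next
    case (Suc n) then show ?case using assms(1)[of n] by simp
  qed
  have "(\<Sum>i<n. g i) \<le> V 0" for n
    using partial[of n] assms(2)[of n] by linarith
  with assms(3) have "summable g" by (rule summableI_nonneg_bounded)
  then show ?thesis by (rule summable_LIMSEQ_zero)
qed

lemma cesaro_orbit_tendsto_zero:
  fixes M :: "real^'n^'n"
  assumes fix0: "\<And>x. M *v x = x \<Longrightarrow> x = 0" and bound: "\<And>i. norm (mpow M i *v y) \<le> b"
  shows "(\<lambda>J. inverse (real (Suc J)) *\<^sub>R (\<Sum>i<Suc J. mpow M i *v y)) \<longlonglongrightarrow> 0"
    (is "?mean \<longlonglongrightarrow> 0")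
proof -
  define f where "f x = x - M *v x" for x
  have lin: "linear f"
    unfolding f_def by (intro linear_compose_sub linear_ident matrix_vector_mul_linear)
  have "inj f"
  proof (rule injI)
    fix a b assume "f a = f b"
    then have "M *v (a - b) = a - b"
      by (simp add: f_def matrix_vector_mult_diff_distrib algebra_simps)
    from fix0[OF this] show "a = b" by simp
  qed
  then obtain c where c: "c > 0" "\<And>x. c * norm x \<le> norm (f x)"
    using linear_inj_bounded_below_pos[OF lin] by blast
  have mean_image: "f (?mean J) = inverse (real (Suc J)) *\<^sub>R (y - mpow M (Suc J) *v y)" for J
  proof -
    have "(\<Sum>i<Suc J. f (mpow M i *v y)) = y - mpow M (Suc J) *v y"
      using sum_lessThan_telescope'[of "\<lambda>i. mpow M i *v y" "Suc J"]
      by (simp add: f_def mult_vec_mpow_Suc del: sum.lessThan_Suc)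
    then show ?thesis by (simp add: linear_scale[OF lin] linear_sum[OF lin] del: sum.lessThan_Suc)
  qed
  have image_bound: "norm (f (?mean J)) \<le> inverse (real (Suc J)) * (norm y + b)" for J
  proof -
    have "norm (y - mpow M (Suc J) *v y) \<le> norm y + b"
      using norm_triangle_ineq4[of y "mpow M (Suc J) *v y"] bound[of "Suc J"] by linarith
    then show ?thesis unfolding mean_image by (simp add: mult_left_mono)
  qed
  have divide_c: "a \<le> inverse c * d" if "c * a \<le> d" for a d
    using c(1) that by (simp add: field_simps)
  have mean_bound: "\<forall>J. norm (?mean J) \<le> inverse c * (inverse (real (Suc J)) * (norm y + b))"
    by (intro allI divide_c[OF order_trans[OF c(2) image_bound]])
  have "(\<lambda>J. inverse c * (inverse (real (Suc J)) * (norm y + b))) \<longlonglongrightarrow> 0"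
    by (intro tendsto_mult_left_zero tendsto_mult_right_zero LIMSEQ_inverse_real_of_nat)
  then show ?thesis
    by (rule Lim_null_comparison[OF always_eventually[OF mean_bound]])
qed

text \<open>The Cesaro means of the translates lie in \<open>F\<close> and converge to \<open>q\<close>.\<close>
lemma orbit_translates_closed_convex_mem:
  fixes M :: "real^'n^'n" and f :: "real^'n \<Rightarrow> 'b::real_normed_vector"
  assumes "closed F" "convex F" and "\<And>x. M *v x = x \<Longrightarrow> x = 0"
    and "\<And>i. norm (mpow M i *v y) \<le> b" and lin: "linear f"
    and mem: "\<And>i. q + f (mpow M i *v y) \<in> F"
  shows "q \<in> F"
proof -
  define mean where "mean = (\<lambda>J. inverse (real (Suc J)) *\<^sub>R (\<Sum>i<Suc J. mpow M i *v y))"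
  have in_F: "q + f (mean J) \<in> F" for J
  proof -
    define r where "r = inverse (real (Suc J))"
    have "(\<Sum>i<Suc J. r *\<^sub>R q) = q"
      by (simp add: r_def sum_constant_scaleR del: sum.lessThan_Suc)
    moreover have "f (mean J) = (\<Sum>i<Suc J. r *\<^sub>R f (mpow M i *v y))"
      by (simp add: mean_def r_def linear_scale[OF lin] linear_sum[OF lin] scaleR_sum_right
          del: sum.lessThan_Suc)
    ultimately have "q + f (mean J) = (\<Sum>i<Suc J. r *\<^sub>R (q + f (mpow M i *v y)))"
      by (simp add: scaleR_add_right sum.distrib del: sum.lessThan_Suc)
    also have "\<dots> \<in> F"
      by (rule convex_sum[OF finite_lessThan assms(2)]) (simp_all add: mem r_def del: sum.lessThan_Suc)
    finally show ?thesis .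
  qed
  have "mean \<longlonglongrightarrow> 0"
    unfolding mean_def by (rule cesaro_orbit_tendsto_zero[OF assms(3,4)])
  moreover have "bounded_linear f"
    using lin by (simp add: linear_conv_bounded_linear)
  ultimately have "(\<lambda>J. q + f (mean J)) \<longlonglongrightarrow> q + f 0"
    by (intro tendsto_add tendsto_const) (rule bounded_linear.tendsto)
  then have "q + f 0 \<in> F"
    by (rule closed_sequentially[OF assms(1) in_F])
  then show ?thesis using linear_0[OF lin] by simp
qed

lemma qnorm2_scaleR: "qnorm2 M (c *\<^sub>R x) = c\<^sup>2 * qnorm2 M x"
  by (simp add: qnorm2_def matrix_vector_mult_scaleR power2_eq_square)

lemma qnorm2_nonneg: "sym_pos_def M \<Longrightarrow> 0 \<le> qnorm2 M x"
  unfolding sym_pos_def_def qnorm2_def by (cases "x = 0") (auto intro: less_imp_le)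

lemma qnorm2_le_norm_sq:
  obtains k where "k \<ge> 0" and "\<And>x. qnorm2 M x \<le> k * (norm x)\<^sup>2"
proof -
  obtain b where b: "b > 0" "\<And>x. norm (M *v x) \<le> b * norm x"
    using linear_bounded_pos[OF matrix_vector_mul_linear[of M]] by blast
  have "qnorm2 M x \<le> b * (norm x)\<^sup>2" for x
  proof -
    have "qnorm2 M x \<le> norm x * norm (M *v x)"
      unfolding qnorm2_def by (rule norm_cauchy_schwarz)
    also have "\<dots> \<le> norm x * (b * norm x)" by (rule mult_left_mono[OF b(2)]) simp
    finally show ?thesis by (simp add: power2_eq_square mult_ac)
  qed
  with b(1) show ?thesis by (intro that[of b]) simp_all
qed

lemma sym_pos_def_qnorm2_ge:
  assumes "sym_pos_def M"
  obtains m where "m > 0" and "\<And>x. m * (norm x)\<^sup>2 \<le> qnorm2 M (x::real^'n)"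
proof -
  have "sphere (0::real^'n) 1 \<noteq> {}"
    by (simp add: sphere_def) (metis norm_axis_1)
  moreover have "continuous_on (sphere 0 1) (qnorm2 M)"
    unfolding qnorm2_def by (intro continuous_intros)
  ultimately obtain x0 where x0: "x0 \<in> sphere 0 1" "\<And>y. y \<in> sphere 0 1 \<Longrightarrow> qnorm2 M x0 \<le> qnorm2 M y"
    using continuous_attains_inf[OF compact_sphere] by blast
  then have "x0 \<noteq> 0" by auto
  then have pos: "qnorm2 M x0 > 0"
    using assms unfolding sym_pos_def_def qnorm2_def by auto
  have "qnorm2 M x0 * (norm x)\<^sup>2 \<le> qnorm2 M x" for x
  proof (cases "x = 0")
    case True then show ?thesis by (simp add: qnorm2_def)
  next
    case False
    then have "qnorm2 M x0 \<le> qnorm2 M (inverse (norm x) *\<^sub>R x)" by (intro x0(2)) simp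
    also have "\<dots> = qnorm2 M x / (norm x)\<^sup>2" by (simp add: qnorm2_scaleR field_simps)
    finally show ?thesis using False by (simp add: field_simps)
  qed
  with pos show ?thesis by (rule that)
qed

lemma inner_transpose_mult_vec: "(a::real^'n) \<bullet> (transpose X *v b) = (X *v a) \<bullet> b"
  by (metis inner_commute dot_lmul_matrix transpose_matrix_vector)

lemma qnorm2_congruence: "qnorm2 (transpose X ** M ** X) a = qnorm2 M (X *v a)"
  by (simp only: qnorm2_def matrix_vector_mul_assoc[symmetric] inner_transpose_mult_vec)

lemma qnorm2_sum_mat: "finite I \<Longrightarrow> qnorm2 (\<Sum>k\<in>I. M k) a = (\<Sum>k\<in>I. qnorm2 (M k) a)"
  by (induction I rule: finite_induct)
     (simp_all add: qnorm2_def matrix_vector_mult_add_rdistrib inner_add_right)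

lemma qnorm2_lyapunov:
  assumes "transpose M ** P ** M - P + Q = 0"
  shows "qnorm2 P (M *v z) + qnorm2 Q z = qnorm2 P z"
proof -
  have "qnorm2 (transpose M ** P ** M - P + Q) z
      = qnorm2 (transpose M ** P ** M) z - qnorm2 P z + qnorm2 Q z"
    by (simp add: qnorm2_def matrix_vector_mult_add_rdistrib matrix_vector_mult_diff_rdistrib
        inner_add_right inner_diff_right)
  moreover have "qnorm2 (transpose M ** P ** M - P + Q) z = 0"
    using assms by (simp add: qnorm2_def)
  ultimately show ?thesis by (simp add: qnorm2_congruence)
qed

lemma sum_lessThan_Suc_swap: "(\<Sum>k<n. f (Suc k)) + f 0 = (\<Sum>k<n. f k) + (f n :: 'a::comm_monoid_add)"
  using sum.lessThan_Suc_shift[of f n] sum.lessThan_Suc[of f n] by (simp add: add.commute)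

lemma power2_norm_add_le: "(norm (x + y))\<^sup>2 \<le> 2 * (norm x)\<^sup>2 + 2 * (norm y)\<^sup>2"
proof -
  have "(norm (x + y))\<^sup>2 \<le> (norm x + norm y)\<^sup>2"
    by (rule power_mono[OF norm_triangle_ineq norm_ge_zero])
  also have "\<dots> \<le> 2 * (norm x)\<^sup>2 + 2 * (norm y)\<^sup>2"
    using power2_sum[of "norm x" "norm y"] power2_diff[of "norm x" "norm y"]
      zero_le_power2[of "norm x - norm y"] by linarith
  finally show ?thesis .
qed

lemma small_weight_exists:
  fixes a b e :: real
  assumes "0 \<le> a" "0 \<le> b" "0 < e"
  obtains l where "0 < l" "l \<le> 1" "l * (1 + a) \<le> 1" "l * b < e"
proof -
  define l where "l = min (1 / (1 + a)) (e / (b + 1))"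
  have le: "l \<le> 1 / (1 + a)" "l \<le> e / (b + 1)" by (simp_all add: l_def)
  have pos: "0 < l" using assms by (simp add: l_def)
  have weight: "l * (1 + a) \<le> 1" using le(1) assms(1) by (simp add: le_divide_eq)
  have "l \<le> 1" using mult_left_mono[of 1 "1 + a" l] pos weight assms(1) by linarith
  moreover have "l * b < e"
  proof -
    have "l * b \<le> e / (b + 1) * b" by (rule mult_right_mono[OF le(2) assms(2)])
    also have "\<dots> < e" using assms(2,3) by (simp add: field_simps)
    finally show ?thesis .
  qed
  ultimately show ?thesis using pos weight by (intro that) simp_all
qed

lemma convex_candidate_arith:
  fixes D l a e :: real
  assumes "0 \<le> D" "0 < l" "l * (1 + a) \<le> 1" "D \<le> (1 - l)\<^sup>2 * D + a * l\<^sup>2 * D + e"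
  shows "l * D \<le> e"
proof -
  have "l * D * (l * (1 + a)) \<le> l * D * 1"
    using assms(1-3) by (intro mult_left_mono) simp_all
  moreover have "(1 - l)\<^sup>2 * D + a * l\<^sup>2 * D + e = D - 2 * (l * D) + l * D * (l * (1 + a)) + e"
    by (simp add: power2_eq_square algebra_simps)
  ultimately show ?thesis using assms(4) by linarith
qed

definition shift_inputs :: "nat \<Rightarrow> (nat \<Rightarrow> 'a::zero) \<Rightarrow> nat \<Rightarrow> 'a" where
  "shift_inputs N v k = (if Suc k < N then v (Suc k) else 0)"

locale mpc_problem =
  fixes A :: "real^'n^'n" and B :: "real^'m^'n" and K :: "real^'n^'m"
    and S :: "real^'p^'p" and Pim :: "real^'p^'n" and \<Gamma> :: "real^'p^'m" and L :: "real^'p^'m"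
    and \<epsilon> :: real and Z :: "((real^'n) \<times> (real^'m)) set" and N :: nat and \<rho> :: nat
    and T0 T :: "real^'p^'p" and Q P :: "real^'n^'n" and R :: "real^'m^'m"
  assumes controllable: "controllable A B"
    and convex_Z: "convex Z" and compact_Z: "compact Z" and zero_in_interior_Z: "0 \<in> interior Z"
    and schur_Ac: "schur (A + B ** K)"
    and rho_pos: "\<rho> > 0" and S_periodic: "mpow S \<rho> = mat 1"
    and regulator: "A ** Pim + B ** \<Gamma> = Pim ** S" and L_eq: "L = \<Gamma> - K ** Pim"
    and eps_pos: "0 < \<epsilon>" and eps_less_1: "\<epsilon> < 1"
    and T0_pd: "sym_pos_def T0"
    and T_eq: "T = (\<Sum>k\<in>{1..\<rho>}. transpose (mpow S k) ** T0 ** mpow S k)"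
    and Q_pd: "sym_pos_def Q" and R_pd: "sym_pos_def R" and P_pd: "sym_pos_def P"
    and lyapunov: "transpose (A + B ** K) ** P ** (A + B ** K) - P + Q = 0"
    and horizon: "CARD('n) \<le> N"
begin

abbreviation Ac :: "real^'n^'n" where "Ac \<equiv> A + B ** K"
abbreviation "feasible_for \<equiv> qp_feasible_for A B K L S \<epsilon> Z N"
abbreviation "feasible \<equiv> qp_feasible A B K L S \<epsilon> Z N"
abbreviation "cost \<equiv> qp_cost A B K L S Pim T Q R P N"
abbreviation "optimal \<equiv> qp_optimal A B K L S Pim T Q R P \<epsilon> Z N"

definition Z_tight :: "((real^'n) \<times> (real^'m)) set" where
  "Z_tight = (\<lambda>z. (1 - \<epsilon>) *\<^sub>R z) ` Z"

text \<open>By the regulator equations, the state-input pair along which the output tracks the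
  reference \<open>S\<^sup>k w\<close> exactly.\<close>
definition steady :: "real^'p \<Rightarrow> nat \<Rightarrow> (real^'n) \<times> (real^'m)" where
  "steady w k = (Pim *v (mpow S k *v w), \<Gamma> *v (mpow S k *v w))"

definition admissible :: "real^'p \<Rightarrow> real^'n \<Rightarrow> bool" where
  "admissible w d \<longleftrightarrow> (\<forall>k. steady w k + (mpow Ac k *v d, K *v (mpow Ac k *v d)) \<in> Z_tight)"

abbreviation deviation :: "real^'n \<Rightarrow> real^'p \<Rightarrow> (nat \<Rightarrow> real^'m) \<Rightarrow> nat \<Rightarrow> real^'n" where
  "deviation x wb v \<equiv> traj Ac B (x - Pim *v wb) v"

lemma N_pos: "N > 0"
proof -
  have "0 < CARD('n)" by simp
  with horizon show ?thesis by linarith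
qed

lemma regulator_Ac: "Ac *v (Pim *v y) + B *v (L *v y) = Pim *v (S *v y)"
proof -
  have "A *v (Pim *v y) + B *v (\<Gamma> *v y) = Pim *v (S *v y)"
    using arg_cong[OF regulator, of "\<lambda>M. M *v y"]
    by (simp add: matrix_vector_mult_add_rdistrib matrix_vector_mul_assoc)
  then show ?thesis
    by (simp add: L_eq matrix_vector_mult_add_rdistrib matrix_vector_mult_diff_rdistrib
        matrix_vector_mul_assoc[symmetric] algebra_simps)
qed

lemma K_Pim_add_L: "K *v (Pim *v y) + L *v y = \<Gamma> *v y"
  by (simp add: L_eq matrix_vector_mult_diff_rdistrib matrix_vector_mul_assoc[symmetric])

lemma pred_state_eq: "pred_state Ac B L S x wb v k = Pim *v (mpow S k *v wb) + deviation x wb v k"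
proof (induction k)
  case 0 then show ?case by simp
next
  case (Suc k)
  have "pred_state Ac B L S x wb v (Suc k)
      = (Ac *v (Pim *v (mpow S k *v wb)) + B *v (L *v (mpow S k *v wb)))
        + (Ac *v deviation x wb v k + B *v v k)"
    using Suc by (simp add: matrix_vector_right_distrib algebra_simps)
  then show ?case by (simp only: regulator_Ac mult_vec_mpow_Suc traj.simps)
qed

lemma state_input_eq:
  "(Pim *v (mpow S k *v w) + z, K *v (Pim *v (mpow S k *v w) + z) + L *v (mpow S k *v w) + u)
   = steady w k + (z, K *v z + u)"
  using K_Pim_add_L[of "mpow S k *v w"]
  by (simp add: steady_def matrix_vector_right_distrib algebra_simps)

lemma O_inf_iff: "(x, w) \<in> O_inf A B K L S \<epsilon> Z \<longleftrightarrow> admissible w (x - Pim *v w)"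
proof -
  have "cl_state Ac B L S x w k = pred_state Ac B L S x w (\<lambda>_. 0) k" for k
    by (induction k) simp_all
  then have "(cl_state Ac B L S x w k, K *v cl_state Ac B L S x w k + L *v (mpow S k *v w))
     = steady w k + (mpow Ac k *v (x - Pim *v w), K *v (mpow Ac k *v (x - Pim *v w)))" for k
    using state_input_eq[of k w "mpow Ac k *v (x - Pim *v w)" 0]
    by (simp add: pred_state_eq traj_zero_input)
  then show ?thesis unfolding O_inf_def admissible_def Z_tight_def by simp
qed

lemma feasible_for_iff:
  "feasible_for x wb v \<longleftrightarrow>
     (\<forall>k<N. steady wb k + (deviation x wb v k, K *v deviation x wb v k + v k) \<in> Z)
   \<and> admissible (mpow S N *v wb) (deviation x wb v N)"
  unfolding qp_feasible_for_def O_inf_iff by (simp add: pred_state_eq state_input_eq)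

lemma cost_eq:
  "cost x w wb v = qnorm2 T (wb - w) + (\<Sum>k<N. qnorm2 Q (deviation x wb v k))
     + (\<Sum>k<N. qnorm2 R (v k)) + qnorm2 P (deviation x wb v N)"
  unfolding qp_cost_def by (simp add: pred_state_eq)

lemma qnorm2_T_eq: "qnorm2 T e = (\<Sum>k\<in>{1..\<rho>}. qnorm2 T0 (mpow S k *v e))"
  unfolding T_eq by (simp add: qnorm2_sum_mat qnorm2_congruence)

lemma qnorm2_T_invariant: "qnorm2 T (S *v e) = qnorm2 T e"
proof -
  define g where "g k = qnorm2 T0 (mpow S k *v e)" for k
  have "qnorm2 T (S *v e) = (\<Sum>k\<in>{1..\<rho>}. g (Suc k))"
    unfolding qnorm2_T_eq g_def by (simp add: mpow_mult_vec_Suc)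
  also have "\<dots> = (\<Sum>k\<in>{Suc 1..\<rho>}. g k) + g (Suc \<rho>)"
    using rho_pos by (simp add: sum.shift_bounds_cl_Suc_ivl[symmetric] sum.cl_ivl_Suc)
  also have "g (Suc \<rho>) = g 1"
    unfolding g_def by (simp add: S_periodic)
  also have "(\<Sum>k\<in>{Suc 1..\<rho>}. g k) + g 1 = qnorm2 T e"
    using rho_pos by (simp add: qnorm2_T_eq g_def sum.atLeast_Suc_atMost)
  finally show ?thesis .
qed

lemma qnorm2_T_ge:
  obtains m where "m > 0" and "\<And>e. m * (norm e)\<^sup>2 \<le> qnorm2 T e"
proof -
  obtain m where m: "m > 0" "\<And>e. m * (norm e)\<^sup>2 \<le> qnorm2 T0 e"
    using sym_pos_def_qnorm2_ge[OF T0_pd] by blast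
  have "qnorm2 T0 (mpow S \<rho> *v e) \<le> qnorm2 T e" for e
    unfolding qnorm2_T_eq
    by (rule member_le_sum) (use rho_pos qnorm2_nonneg[OF T0_pd] in auto)
  with S_periodic have "m * (norm e)\<^sup>2 \<le> qnorm2 T e" for e
    using order_trans[OF m(2)[of e]] by simp
  with m(1) show ?thesis by (rule that)
qed

lemma qnorm2_T_nonneg: "0 \<le> qnorm2 T e"
proof -
  obtain m where "m > 0" "m * (norm e)\<^sup>2 \<le> qnorm2 T e" using qnorm2_T_ge by blast
  moreover from \<open>m > 0\<close> have "0 \<le> m * (norm e)\<^sup>2" by simp
  ultimately show ?thesis by linarith
qed

lemma Z_tight_subset: "Z_tight \<subseteq> Z"
proof
  fix a assume "a \<in> Z_tight"
  then obtain z where z: "z \<in> Z" "a = (1 - \<epsilon>) *\<^sub>R z + \<epsilon> *\<^sub>R 0" unfolding Z_tight_def by auto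
  have "0 \<in> Z" using zero_in_interior_Z interior_subset by blast
  show "a \<in> Z"
    unfolding z(2) by (rule convexD[OF convex_Z z(1) \<open>0 \<in> Z\<close>]) (use eps_pos eps_less_1 in auto)
qed

lemma closed_Z_tight: "closed Z_tight"
  unfolding Z_tight_def by (intro compact_imp_closed compact_scaling compact_Z)

lemma convex_Z_tight: "convex Z_tight"
  unfolding Z_tight_def by (intro convex_scaling convex_Z)

lemma bounded_Z_tight: "bounded Z_tight"
  unfolding Z_tight_def by (intro compact_imp_bounded compact_scaling compact_Z)

lemma Z_tight_add_small:
  assumes "a \<in> Z_tight" "ball 0 r \<subseteq> Z" "norm p < \<epsilon> * r"
  shows "a + p \<in> Z"
proof -
  obtain z where z: "z \<in> Z" "a = (1 - \<epsilon>) *\<^sub>R z" using assms(1) unfolding Z_tight_def by auto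
  have "norm (inverse \<epsilon> *\<^sub>R p) < r"
    using assms(3) eps_pos by (simp add: field_simps)
  with assms(2) have "inverse \<epsilon> *\<^sub>R p \<in> Z" by auto
  have "(1 - \<epsilon>) *\<^sub>R z + \<epsilon> *\<^sub>R (inverse \<epsilon> *\<^sub>R p) \<in> Z"
    by (rule convexD[OF convex_Z z(1) \<open>inverse \<epsilon> *\<^sub>R p \<in> Z\<close>]) (use eps_pos eps_less_1 in auto)
  with z eps_pos show ?thesis by simp
qed

lemma steady_Suc: "steady (S *v w) k = steady w (Suc k)"
  by (simp add: steady_def mpow_mult_vec_Suc)

lemma steady_mpow: "steady (mpow S j *v w) k = steady w (k + j)"
  by (simp add: steady_def mpow_mult_vec_add)

lemma steady_periodic: "steady w (k + \<rho> * j) = steady w k"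
  by (simp add: steady_def mpow_periodic[OF S_periodic])

lemma steady_linear: "steady (a *\<^sub>R w1 + b *\<^sub>R w2) k = a *\<^sub>R steady w1 k + b *\<^sub>R steady w2 k"
  by (simp add: steady_def matrix_vector_right_distrib matrix_vector_mult_scaleR)

lemma admissible_Suc: "admissible w d \<Longrightarrow> admissible (S *v w) (Ac *v d)"
  unfolding admissible_def by (simp add: steady_Suc mpow_mult_vec_Suc del: mpow.simps)

lemma admissible_zero: "(\<And>k. steady w k \<in> Z_tight) \<Longrightarrow> admissible w 0"
  unfolding admissible_def by (simp add: zero_prod_def[symmetric])

text \<open>Average the admissible orbit along multiples of the period: the deviation part of the
  averages vanishes in the limit because \<open>Ac\<^sup>\<rho>\<close> has no nonzero fixed point.\<close>
lemma admissible_steady: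
  assumes "admissible w d"
  shows "steady w k \<in> Z_tight"
proof -
  define M where "M = mpow Ac \<rho>"
  define y where "y = mpow Ac k *v d"
  have fix0: "z = 0" if "M *v z = z" for z
    using schur_no_periodic_point[OF schur_Ac rho_pos] that unfolding M_def by blast
  have mem: "steady w k + (mpow M i *v y, K *v (mpow M i *v y)) \<in> Z_tight" for i
  proof -
    have "mpow Ac (k + \<rho> * i) = mpow M i ** mpow Ac k"
      unfolding M_def by (simp only: add.commute[of k] mpow_add mpow_mult)
    then have "mpow Ac (k + \<rho> * i) *v d = mpow M i *v y"
      by (simp add: y_def matrix_vector_mul_assoc)
    moreover have "steady w (k + \<rho> * i) + (mpow Ac (k + \<rho> * i) *v d,
        K *v (mpow Ac (k + \<rho> * i) *v d)) \<in> Z_tight"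
      using assms unfolding admissible_def by blast
    ultimately show ?thesis by (simp add: steady_periodic)
  qed
  obtain b where b: "\<And>z. z \<in> Z_tight \<Longrightarrow> norm z \<le> b"
    using bounded_Z_tight unfolding bounded_iff by blast
  have bound: "norm (mpow M i *v y) \<le> b + norm (steady w k)" for i
  proof -
    let ?p = "(mpow M i *v y, K *v (mpow M i *v y))"
    have "norm ?p \<le> norm (steady w k + ?p) + norm (steady w k)"
      using norm_triangle_ineq4[of "steady w k + ?p" "steady w k"] by simp
    then show ?thesis
      using b[OF mem[of i]] norm_fst_le[of "mpow M i *v y" "K *v (mpow M i *v y)"] by linarith
  qed
  have "linear (\<lambda>z. (z, K *v z))"
    by (simp add: linear_conv_bounded_linear bounded_linear_Pair bounded_linear_ident)
  from orbit_translates_closed_convex_mem[OF closed_Z_tight convex_Z_tight fix0 bound this mem]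
  show ?thesis .
qed

lemma feasible_for_steady:
  assumes "feasible_for x wb v"
  shows "steady wb k \<in> Z_tight"
proof -
  have "admissible (mpow S N *v wb) (deviation x wb v N)"
    using assms feasible_for_iff by blast
  then have "steady wb (k + \<rho> * N - N + N) \<in> Z_tight"
    using admissible_steady[of "mpow S N *v wb"] by (simp only: steady_mpow)
  moreover have "k + \<rho> * N - N + N = k + \<rho> * N"
    using mult_le_mono1[of 1 \<rho> N] rho_pos by linarith
  ultimately show ?thesis by (simp add: steady_periodic)
qed

definition next_state :: "real^'n \<Rightarrow> real^'p \<Rightarrow> (nat \<Rightarrow> real^'m) \<Rightarrow> real^'n" where
  "next_state x wb v = A *v x + B *v (K *v x + L *v wb + v 0)"

lemma next_state_deviation: "next_state x wb v - Pim *v (S *v wb) = deviation x wb v 1"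
proof -
  have "next_state x wb v = Ac *v x + B *v (L *v wb) + B *v v 0"
    by (simp add: next_state_def matrix_vector_mult_add_rdistrib matrix_vector_right_distrib
        matrix_vector_mul_assoc)
  also have "Ac *v x = Ac *v (Pim *v wb) + Ac *v (x - Pim *v wb)"
    by (simp add: matrix_vector_mult_diff_distrib)
  finally have "next_state x wb v
      = (Ac *v (Pim *v wb) + B *v (L *v wb)) + (Ac *v (x - Pim *v wb) + B *v v 0)"
    by (simp add: algebra_simps)
  then show ?thesis by (simp add: regulator_Ac)
qed

lemma deviation_shift:
  assumes "k < N"
  shows "deviation (next_state x wb v) (S *v wb) (shift_inputs N v) k = deviation x wb v (Suc k)"
proof -
  have "deviation (next_state x wb v) (S *v wb) (shift_inputs N v) k
      = traj Ac B (deviation x wb v 1) (\<lambda>j. v (Suc j)) k"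
    unfolding next_state_deviation by (rule traj_cong) (use assms in \<open>simp add: shift_inputs_def\<close>)
  then show ?thesis by (simp only: traj_Suc_shift)
qed

lemma deviation_shift_horizon:
  "deviation (next_state x wb v) (S *v wb) (shift_inputs N v) N = Ac *v deviation x wb v N"
proof -
  obtain M where N: "N = Suc M" using N_pos by (cases N) auto
  then show ?thesis using deviation_shift[of M x wb v] by (simp add: shift_inputs_def)
qed

lemma feasible_for_shift:
  assumes "feasible_for x wb v"
  shows "feasible_for (next_state x wb v) (S *v wb) (shift_inputs N v)"
proof -
  let ?z = "deviation x wb v" and ?z' = "deviation (next_state x wb v) (S *v wb) (shift_inputs N v)"
  have stage: "\<And>k. k < N \<Longrightarrow> steady wb k + (?z k, K *v ?z k + v k) \<in> Z"
    and terminal: "admissible (mpow S N *v wb) (?z N)"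
    using assms unfolding feasible_for_iff by auto
  have "steady (S *v wb) k + (?z' k, K *v ?z' k + shift_inputs N v k) \<in> Z" if "k < N" for k
  proof (cases "Suc k < N")
    case True
    then show ?thesis
      using stage[OF True] deviation_shift[OF that] by (simp add: steady_Suc shift_inputs_def)
  next
    case False
    with that have "Suc k = N" by simp
    moreover have "steady (mpow S N *v wb) 0 + (?z N, K *v ?z N) \<in> Z_tight"
      using terminal[unfolded admissible_def, rule_format, of 0] by simp
    ultimately show ?thesis
      using Z_tight_subset deviation_shift[OF that] False
      by (auto simp: steady_Suc steady_mpow shift_inputs_def)
  qed
  moreover have "admissible (mpow S N *v (S *v wb)) (?z' N)"
    using admissible_Suc[OF terminal]
    by (simp add: deviation_shift_horizon mpow_mult_vec_Suc mult_vec_mpow_Suc)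
  ultimately show ?thesis unfolding feasible_for_iff by blast
qed

text \<open>\<open>T\<close> is \<open>S\<close>-invariant, and the Lyapunov equation for \<open>P\<close> absorbs the new last stage cost.\<close>
lemma cost_shift:
  "cost (next_state x wb v) (S *v w) (S *v wb) (shift_inputs N v) + qnorm2 Q (x - Pim *v wb)
     + qnorm2 R (v 0) = cost x w wb v"
proof -
  obtain M where N: "N = Suc M" using N_pos by (cases N) auto
  let ?z = "deviation x wb v" and ?z' = "deviation (next_state x wb v) (S *v wb) (shift_inputs N v)"
  have T: "qnorm2 T (S *v wb - S *v w) = qnorm2 T (wb - w)"
    using qnorm2_T_invariant[of "wb - w"] by (simp add: matrix_vector_mult_diff_distrib)
  have "(\<Sum>k<N. qnorm2 Q (?z' k)) = (\<Sum>k<N. qnorm2 Q (?z (Suc k)))"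
    by (rule sum.cong) (simp_all add: deviation_shift)
  then have sQ: "(\<Sum>k<N. qnorm2 Q (?z' k)) + qnorm2 Q (?z 0) = (\<Sum>k<N. qnorm2 Q (?z k)) + qnorm2 Q (?z N)"
    using sum_lessThan_Suc_swap[of "\<lambda>k. qnorm2 Q (?z k)" N] by (simp only:)
  have "(\<Sum>k<N. qnorm2 R (shift_inputs N v k)) = (\<Sum>k<M. qnorm2 R (v (Suc k)))"
    unfolding N by (simp add: shift_inputs_def qnorm2_def)
  moreover have "(\<Sum>k<N. qnorm2 R (v k)) = qnorm2 R (v 0) + (\<Sum>k<M. qnorm2 R (v (Suc k)))"
    unfolding N by (rule sum.lessThan_Suc_shift)
  ultimately have sR: "(\<Sum>k<N. qnorm2 R (shift_inputs N v k)) + qnorm2 R (v 0) = (\<Sum>k<N. qnorm2 R (v k))"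
    by simp
  have P: "qnorm2 P (?z' N) + qnorm2 Q (?z N) = qnorm2 P (?z N)"
    using qnorm2_lyapunov[OF lyapunov] by (simp add: deviation_shift_horizon)
  show ?thesis
    unfolding cost_eq using T sQ sR P by (simp add: matrix_vector_mult_diff_distrib)
qed

subsection \<open>Convergence of the artificial reference\<close>

lemma feasible_for_if_small_deviation:
  obtains \<delta> where "\<delta> > 0"
    and "\<And>x wb v a. (\<And>k. steady wb k \<in> Z_tight) \<Longrightarrow> deviation x wb v N = 0
          \<Longrightarrow> (\<And>k. k < N \<Longrightarrow> norm (deviation x wb v k) \<le> a) \<Longrightarrow> (\<And>k. k < N \<Longrightarrow> norm (v k) \<le> a)
          \<Longrightarrow> a < \<delta> \<Longrightarrow> feasible_for x wb v"
proof -
  obtain r where r: "r > 0" "ball 0 r \<subseteq> Z"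
    using zero_in_interior_Z mem_interior by blast
  obtain kK where kK: "kK > 0" "\<And>y. norm (K *v y) \<le> kK * norm y"
    using linear_bounded_pos[OF matrix_vector_mul_linear[of K]] by blast
  have "\<epsilon> * r / (2 + kK) > 0" using eps_pos r(1) kK(1) by simp
  moreover have "feasible_for x wb v"
    if steady: "\<And>k. steady wb k \<in> Z_tight" and dead: "deviation x wb v N = 0"
      and z: "\<And>k. k < N \<Longrightarrow> norm (deviation x wb v k) \<le> a" and u: "\<And>k. k < N \<Longrightarrow> norm (v k) \<le> a"
      and small: "a < \<epsilon> * r / (2 + kK)" for x wb v a
    unfolding feasible_for_iff dead
  proof (intro conjI allI impI)
    fix k assume "k < N"
    let ?z = "deviation x wb v k"
    have "norm (?z, K *v ?z + v k) \<le> norm ?z + (kK * norm ?z + norm (v k))"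
      using norm_Pair_le[of ?z "K *v ?z + v k"] norm_triangle_ineq[of "K *v ?z" "v k"] kK(2)[of ?z]
      by linarith
    also have "\<dots> \<le> a + (kK * a + a)"
      using z[OF \<open>k < N\<close>] u[OF \<open>k < N\<close>] mult_left_mono[OF z[OF \<open>k < N\<close>] less_imp_le[OF kK(1)]]
      by linarith
    also have "\<dots> < \<epsilon> * r"
      using small kK(1) by (simp add: field_simps)
    finally show "steady wb k + (?z, K *v ?z + v k) \<in> Z"
      by (rule Z_tight_add_small[OF steady r(2)])
  next
    show "admissible (mpow S N *v wb) 0"
      by (rule admissible_zero) (simp add: steady_mpow steady)
  qed
  ultimately show ?thesis by (rule that)
qed

lemma cost_le_if_bounded:
  obtains c where "c \<ge> 0"
    and "\<And>x w wb v a. deviation x wb v N = 0 \<Longrightarrow> (\<And>k. k < N \<Longrightarrow> norm (deviation x wb v k) \<le> a)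
          \<Longrightarrow> (\<And>k. k < N \<Longrightarrow> norm (v k) \<le> a) \<Longrightarrow> cost x w wb v \<le> qnorm2 T (wb - w) + c * a\<^sup>2"
proof -
  obtain kQ where kQ: "kQ \<ge> 0" "\<And>y. qnorm2 Q y \<le> kQ * (norm y)\<^sup>2"
    using qnorm2_le_norm_sq[of Q] by blast
  obtain kR where kR: "kR \<ge> 0" "\<And>y. qnorm2 R y \<le> kR * (norm y)\<^sup>2"
    using qnorm2_le_norm_sq[of R] by blast
  have qnorm2_le: "qnorm2 M y \<le> k * a\<^sup>2"
    if "\<And>y. qnorm2 M y \<le> k * (norm y)\<^sup>2" "k \<ge> 0" "norm y \<le> a" for M k y and a :: real
  proof -
    have "(norm y)\<^sup>2 \<le> a\<^sup>2" by (rule power_mono[OF that(3) norm_ge_zero])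
    with that(1)[of y] mult_left_mono[OF this that(2)] show ?thesis by linarith
  qed
  have bound: "cost x w wb v \<le> qnorm2 T (wb - w) + (real N * (kQ + kR)) * a\<^sup>2"
    if "deviation x wb v N = 0" "\<And>k. k < N \<Longrightarrow> norm (deviation x wb v k) \<le> a"
      "\<And>k. k < N \<Longrightarrow> norm (v k) \<le> a" for x w wb v a
  proof -
    have "(\<Sum>k<N. qnorm2 Q (deviation x wb v k)) \<le> (\<Sum>k<N. kQ * a\<^sup>2)"
      by (rule sum_mono) (use qnorm2_le[OF kQ(2,1)] that(2) in simp)
    moreover have "(\<Sum>k<N. qnorm2 R (v k)) \<le> (\<Sum>k<N. kR * a\<^sup>2)"
      by (rule sum_mono) (use qnorm2_le[OF kR(2,1)] that(3) in simp)
    ultimately show ?thesis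
      unfolding cost_eq that(1) by (simp add: qnorm2_def algebra_simps)
  qed
  have "real N * (kQ + kR) \<ge> 0" using kQ(1) kR(1) by simp
  then show ?thesis using bound by (rule that)
qed

lemma deadbeat_candidate:
  obtains \<eta> c where "\<eta> > 0" and "c \<ge> 0"
    and "\<And>x w wb. (\<And>k. steady wb k \<in> Z_tight) \<Longrightarrow> norm (x - Pim *v wb) < \<eta> \<Longrightarrow>
          \<exists>v. feasible_for x wb v \<and> cost x w wb v \<le> qnorm2 T (wb - w) + c * (norm (x - Pim *v wb))\<^sup>2"
proof -
  obtain c1 D where c1: "c1 > 0" and dead: "\<And>z. traj Ac B z (D z) N = 0"
    and z_bound: "\<And>z k. k \<le> N \<Longrightarrow> norm (traj Ac B z (D z) k) \<le> c1 * norm z"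
    and v_bound: "\<And>z k. k \<le> N \<Longrightarrow> norm (D z k) \<le> c1 * norm z"
    using controllable_bounded_deadbeat[OF controllable horizon, where K = K] by blast
  obtain \<delta> where \<delta>: "\<delta> > 0" and feasible: "\<And>x wb v a. (\<And>k. steady wb k \<in> Z_tight)
      \<Longrightarrow> deviation x wb v N = 0 \<Longrightarrow> (\<And>k. k < N \<Longrightarrow> norm (deviation x wb v k) \<le> a)
      \<Longrightarrow> (\<And>k. k < N \<Longrightarrow> norm (v k) \<le> a) \<Longrightarrow> a < \<delta> \<Longrightarrow> feasible_for x wb v"
    using feasible_for_if_small_deviation by blast
  obtain c where c: "c \<ge> 0" and cost_le: "\<And>x w wb v a. deviation x wb v N = 0
      \<Longrightarrow> (\<And>k. k < N \<Longrightarrow> norm (deviation x wb v k) \<le> a) \<Longrightarrow> (\<And>k. k < N \<Longrightarrow> norm (v k) \<le> a)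
      \<Longrightarrow> cost x w wb v \<le> qnorm2 T (wb - w) + c * a\<^sup>2"
    using cost_le_if_bounded by blast
  have "\<delta> / c1 > 0" using \<delta> c1 by simp
  moreover have "c * c1\<^sup>2 \<ge> 0" using c by simp
  moreover have "\<exists>v. feasible_for x wb v
      \<and> cost x w wb v \<le> qnorm2 T (wb - w) + c * c1\<^sup>2 * (norm (x - Pim *v wb))\<^sup>2"
    if steady: "\<And>k. steady wb k \<in> Z_tight" and small: "norm (x - Pim *v wb) < \<delta> / c1" for x w wb
  proof (intro exI conjI)
    let ?d = "x - Pim *v wb"
    have "c1 * norm ?d < \<delta>" using small c1 by (simp add: field_simps)
    then show "feasible_for x wb (D ?d)"
      by (intro feasible[OF steady, where a = "c1 * norm ?d"]) (simp_all add: dead z_bound v_bound)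
    have "cost x w wb (D ?d) \<le> qnorm2 T (wb - w) + c * (c1 * norm ?d)\<^sup>2"
      by (rule cost_le[where a = "c1 * norm ?d"]) (simp_all add: dead z_bound v_bound)
    then show "cost x w wb (D ?d) \<le> qnorm2 T (wb - w) + c * c1\<^sup>2 * (norm ?d)\<^sup>2"
      by (simp add: power_mult_distrib mult.assoc)
  qed
  ultimately show ?thesis by (rule that)
qed

lemma offset_le_cost: "qnorm2 T (wb - w) \<le> cost x w wb v"
  unfolding cost_eq
  using qnorm2_nonneg[OF Q_pd] qnorm2_nonneg[OF R_pd] qnorm2_nonneg[OF P_pd]
  by (simp add: sum_nonneg)

lemma cost_nonneg: "0 \<le> cost x w wb v"
  using qnorm2_T_nonneg offset_le_cost by (rule order_trans)

lemma optimal_convex_candidate: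
  obtains \<eta> c where "\<eta> > 0" and "c \<ge> 0"
    and "\<And>x w wb v l. optimal x w wb v \<Longrightarrow> (\<And>k. steady w k \<in> Z_tight) \<Longrightarrow> 0 \<le> l \<Longrightarrow> l \<le> 1 \<Longrightarrow>
          norm (x - Pim *v ((1 - l) *\<^sub>R wb + l *\<^sub>R w)) < \<eta> \<Longrightarrow>
          qnorm2 T (wb - w) \<le> (1 - l)\<^sup>2 * qnorm2 T (wb - w)
            + c * (norm (x - Pim *v ((1 - l) *\<^sub>R wb + l *\<^sub>R w)))\<^sup>2"
proof -
  obtain \<eta> c where \<eta>: "\<eta> > 0" and c: "c \<ge> 0" and candidate: "\<And>x w wb. (\<And>k. steady wb k \<in> Z_tight)
      \<Longrightarrow> norm (x - Pim *v wb) < \<eta> \<Longrightarrow>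
      \<exists>v. feasible_for x wb v \<and> cost x w wb v \<le> qnorm2 T (wb - w) + c * (norm (x - Pim *v wb))\<^sup>2"
    using deadbeat_candidate by blast
  have "qnorm2 T (wb - w) \<le> (1 - l)\<^sup>2 * qnorm2 T (wb - w)
          + c * (norm (x - Pim *v ((1 - l) *\<^sub>R wb + l *\<^sub>R w)))\<^sup>2"
    if opt: "optimal x w wb v" and steady_w: "\<And>k. steady w k \<in> Z_tight" and l: "0 \<le> l" "l \<le> 1"
      and small: "norm (x - Pim *v ((1 - l) *\<^sub>R wb + l *\<^sub>R w)) < \<eta>" for x w wb v l
  proof -
    define wb' where "wb' = (1 - l) *\<^sub>R wb + l *\<^sub>R w"
    have "steady wb' k \<in> Z_tight" for k
    proof -
      have "steady wb k \<in> Z_tight"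
        using opt feasible_for_steady unfolding qp_optimal_def by blast
      from convexD[OF convex_Z_tight this steady_w, of "1 - l" l] l
      show ?thesis unfolding wb'_def steady_linear by simp
    qed
    then obtain v' where feas': "feasible_for x wb' v'"
      and cost': "cost x w wb' v' \<le> qnorm2 T (wb' - w) + c * (norm (x - Pim *v wb'))\<^sup>2"
      using candidate small[folded wb'_def] by blast
    have "wb' - w = (1 - l) *\<^sub>R (wb - w)"
      unfolding wb'_def by (simp add: algebra_simps)
    then have "qnorm2 T (wb' - w) = (1 - l)\<^sup>2 * qnorm2 T (wb - w)"
      by (simp add: qnorm2_scaleR)
    moreover have "cost x w wb v \<le> cost x w wb' v'"
      using opt feas' unfolding qp_optimal_def by blast
    ultimately show ?thesis
      using offset_le_cost[of wb w x v] cost' unfolding wb'_def by linarith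
  qed
  with \<eta> c show ?thesis by (rule that)
qed

lemma steady_Pim_diff_bounded:
  obtains \<beta> where "\<beta> \<ge> 0"
    and "\<And>w wb. steady w 0 \<in> Z_tight \<Longrightarrow> steady wb 0 \<in> Z_tight \<Longrightarrow> norm (Pim *v (wb - w)) \<le> \<beta>"
proof -
  obtain b where b: "\<And>z. z \<in> Z_tight \<Longrightarrow> norm z \<le> b"
    using bounded_Z_tight unfolding bounded_iff by blast
  have Pim_le: "norm (Pim *v w) \<le> b" if "steady w 0 \<in> Z_tight" for w
  proof -
    have "norm (Pim *v w) \<le> norm (steady w 0)"
      using norm_fst_le[of "Pim *v w" "\<Gamma> *v w"] by (simp add: steady_def)
    with b[OF that] show ?thesis by linarith
  qed
  have "norm (Pim *v (wb - w)) \<le> 2 * \<bar>b\<bar>" if "steady w 0 \<in> Z_tight" "steady wb 0 \<in> Z_tight" for w wb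
    using Pim_le[OF that(1)] Pim_le[OF that(2)] norm_triangle_ineq4[of "Pim *v wb" "Pim *v w"]
    by (simp add: matrix_vector_mult_diff_distrib)
  then show ?thesis by (intro that[of "2 * \<bar>b\<bar>"]) simp_all
qed

lemma Pim_qnorm2_T_bound:
  obtains k where "k \<ge> 0" and "\<And>e. (norm (Pim *v e))\<^sup>2 \<le> k * qnorm2 T e"
proof -
  obtain m where m: "m > 0" "\<And>e. m * (norm e)\<^sup>2 \<le> qnorm2 T e"
    using qnorm2_T_ge by blast
  obtain b where b: "b > 0" "\<And>e. norm (Pim *v e) \<le> b * norm e"
    using linear_bounded_pos[OF matrix_vector_mul_linear[of Pim]] by blast
  have "(norm (Pim *v e))\<^sup>2 \<le> b\<^sup>2 / m * qnorm2 T e" for e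
  proof -
    have "(norm (Pim *v e))\<^sup>2 \<le> (b * norm e)\<^sup>2"
      by (rule power_mono[OF b(2) norm_ge_zero])
    also have "\<dots> = b\<^sup>2 / m * (m * (norm e)\<^sup>2)"
      using m(1) by (simp add: power_mult_distrib)
    also have "\<dots> \<le> b\<^sup>2 / m * qnorm2 T e"
      using m by (intro mult_left_mono) simp_all
    finally show ?thesis .
  qed
  moreover have "b\<^sup>2 / m \<ge> 0" using m(1) by simp
  ultimately show ?thesis using that by blast
qed

text \<open>Move \<open>wb\<close> the fraction \<open>l\<close> towards \<open>w\<close>: the deviation changes by \<open>l Pim (wb - w)\<close>, which
  is uniformly bounded because both steady states satisfy the tightened constraints.\<close>
lemma offset_candidate_estimate:
  obtains \<eta> a \<beta> c where "\<eta> > 0" and "a \<ge> 0" and "\<beta> \<ge> 0"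
    and "\<And>x w wb v l. optimal x w wb v \<Longrightarrow> (\<And>k. steady w k \<in> Z_tight) \<Longrightarrow> 0 < l \<Longrightarrow> l \<le> 1
          \<Longrightarrow> l * \<beta> < \<eta> \<Longrightarrow> norm (x - Pim *v wb) < \<eta> \<Longrightarrow>
          qnorm2 T (wb - w) \<le> (1 - l)\<^sup>2 * qnorm2 T (wb - w) + a * l\<^sup>2 * qnorm2 T (wb - w)
            + c * (norm (x - Pim *v wb))\<^sup>2"
proof -
  obtain \<eta> c where \<eta>: "\<eta> > 0" and c: "c \<ge> 0" and compare: "\<And>x w wb v l. optimal x w wb v
      \<Longrightarrow> (\<And>k. steady w k \<in> Z_tight) \<Longrightarrow> 0 \<le> l \<Longrightarrow> l \<le> 1
      \<Longrightarrow> norm (x - Pim *v ((1 - l) *\<^sub>R wb + l *\<^sub>R w)) < \<eta>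
      \<Longrightarrow> qnorm2 T (wb - w) \<le> (1 - l)\<^sup>2 * qnorm2 T (wb - w)
            + c * (norm (x - Pim *v ((1 - l) *\<^sub>R wb + l *\<^sub>R w)))\<^sup>2"
    using optimal_convex_candidate by blast
  obtain \<beta> where \<beta>: "\<beta> \<ge> 0" and Pim_diff: "\<And>w wb. steady w 0 \<in> Z_tight
      \<Longrightarrow> steady wb 0 \<in> Z_tight \<Longrightarrow> norm (Pim *v (wb - w)) \<le> \<beta>"
    using steady_Pim_diff_bounded by blast
  obtain k where k: "k \<ge> 0" "\<And>e. (norm (Pim *v e))\<^sup>2 \<le> k * qnorm2 T e"
    using Pim_qnorm2_T_bound by blast
  have eta2: "\<eta> / 2 > 0" and a: "2 * c * k \<ge> 0" using \<eta> c k(1) by simp_all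
  have main: "qnorm2 T (wb - w) \<le> (1 - l)\<^sup>2 * qnorm2 T (wb - w)
      + (2 * c * k) * l\<^sup>2 * qnorm2 T (wb - w) + (2 * c) * (norm (x - Pim *v wb))\<^sup>2"
    if opt: "optimal x w wb v" and steady_w: "\<And>k. steady w k \<in> Z_tight" and l: "0 < l" "l \<le> 1"
      and weight: "l * \<beta> < \<eta> / 2" and small: "norm (x - Pim *v wb) < \<eta> / 2" for x w wb v l
  proof -
    define z where "z = x - Pim *v wb"
    define p where "p = l *\<^sub>R (Pim *v (wb - w))"
    have "steady wb 0 \<in> Z_tight"
      using opt feasible_for_steady unfolding qp_optimal_def by blast
    with steady_w have "norm p \<le> l * \<beta>"
      unfolding p_def using l(1) Pim_diff by (simp add: mult_left_mono)
    then have "norm (z + p) < \<eta>"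
      using norm_triangle_ineq[of z p] small weight unfolding z_def by linarith
    moreover have "x - Pim *v ((1 - l) *\<^sub>R wb + l *\<^sub>R w) = z + p"
      unfolding z_def p_def
      by (simp add: matrix_vector_right_distrib matrix_vector_mult_diff_distrib
          matrix_vector_mult_scaleR algebra_simps)
    ultimately have "qnorm2 T (wb - w) \<le> (1 - l)\<^sup>2 * qnorm2 T (wb - w) + c * (norm (z + p))\<^sup>2"
      using compare[OF opt steady_w less_imp_le[OF l(1)] l(2)] by simp
    moreover have "(norm p)\<^sup>2 \<le> l\<^sup>2 * (k * qnorm2 T (wb - w))"
      using l(1) k(2)[of "wb - w"] by (simp add: p_def power_mult_distrib mult_left_mono)
    then have "c * (norm (z + p))\<^sup>2 \<le> c * (2 * (norm z)\<^sup>2 + 2 * (l\<^sup>2 * (k * qnorm2 T (wb - w))))"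
      using power2_norm_add_le[of z p] by (intro mult_left_mono[OF _ c]) linarith
    moreover have "c * (2 * (norm z)\<^sup>2 + 2 * (l\<^sup>2 * (k * qnorm2 T (wb - w))))
        = (2 * c * k) * l\<^sup>2 * qnorm2 T (wb - w) + (2 * c) * (norm z)\<^sup>2"
      by (simp add: algebra_simps)
    ultimately show ?thesis unfolding z_def by linarith
  qed
  show ?thesis by (rule that[OF eta2 a \<beta> main])
qed

lemma optimal_offset_bound:
  obtains \<eta> c where "\<eta> > 0"
    and "\<And>x w wb v. optimal x w wb v \<Longrightarrow> (\<And>k. steady w k \<in> Z_tight) \<Longrightarrow>
          norm (x - Pim *v wb) < \<eta> \<Longrightarrow> qnorm2 T (wb - w) \<le> c * (norm (x - Pim *v wb))\<^sup>2"
proof -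
  obtain \<eta> a \<beta> c where \<eta>: "\<eta> > 0" and a: "a \<ge> 0" and \<beta>: "\<beta> \<ge> 0"
    and estimate: "\<And>x w wb v l. optimal x w wb v \<Longrightarrow> (\<And>k. steady w k \<in> Z_tight) \<Longrightarrow> 0 < l
      \<Longrightarrow> l \<le> 1 \<Longrightarrow> l * \<beta> < \<eta> \<Longrightarrow> norm (x - Pim *v wb) < \<eta> \<Longrightarrow>
      qnorm2 T (wb - w) \<le> (1 - l)\<^sup>2 * qnorm2 T (wb - w) + a * l\<^sup>2 * qnorm2 T (wb - w)
        + c * (norm (x - Pim *v wb))\<^sup>2"
    using offset_candidate_estimate by blast
  obtain l where l: "0 < l" "l \<le> 1" "l * (1 + a) \<le> 1" "l * \<beta> < \<eta>"
    using small_weight_exists[OF a \<beta> \<eta>] by blast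
  have "qnorm2 T (wb - w) \<le> c / l * (norm (x - Pim *v wb))\<^sup>2"
    if "optimal x w wb v" "\<And>k. steady w k \<in> Z_tight" "norm (x - Pim *v wb) < \<eta>" for x w wb v
  proof -
    have "l * qnorm2 T (wb - w) \<le> c * (norm (x - Pim *v wb))\<^sup>2"
      using estimate[OF that(1,2) l(1,2,4) that(3)]
      by (rule convex_candidate_arith[OF qnorm2_T_nonneg l(1,3)])
    then show ?thesis using l(1) by (simp add: field_simps)
  qed
  with \<eta> show ?thesis by (rule that)
qed

end

locale mpc_closed_loop = mpc_problem +
  fixes x u w
  assumes plant: "\<And>s. x (Suc s) = A *v x s + B *v u s"
    and exosystem: "\<And>s. w (Suc s) = S *v w s"
    and mpc_law: "\<And>s. feasible (x s) (w s) \<Longrightarrow>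
      \<exists>wb v. optimal (x s) (w s) wb v \<and> u s = K *v x s + L *v wb + v 0"
begin

text \<open>A choice of optimizer producing the applied input; unspecified where the QP is infeasible.\<close>
definition optimizer where
  "optimizer s = (SOME (wb, v). optimal (x s) (w s) wb v \<and> u s = K *v x s + L *v wb + v 0)"

definition wb_opt where "wb_opt s = fst (optimizer s)"

definition v_opt where "v_opt s = snd (optimizer s)"

lemma optimizer:
  assumes "feasible (x s) (w s)"
  shows "optimal (x s) (w s) (wb_opt s) (v_opt s)" and "u s = K *v x s + L *v wb_opt s + v_opt s 0"
proof -
  let ?P = "\<lambda>(wb, v). optimal (x s) (w s) wb v \<and> u s = K *v x s + L *v wb + v 0"
  from mpc_law[OF assms] obtain wb v where "?P (wb, v)" by auto
  then have "?P (optimizer s)"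
    unfolding optimizer_def by (rule someI[where P = ?P])
  then show "optimal (x s) (w s) (wb_opt s) (v_opt s)" and "u s = K *v x s + L *v wb_opt s + v_opt s 0"
    by (simp_all add: wb_opt_def v_opt_def case_prod_unfold)
qed

lemma x_Suc: "feasible (x s) (w s) \<Longrightarrow> x (Suc s) = next_state (x s) (wb_opt s) (v_opt s)"
  using plant[of s] optimizer(2) unfolding next_state_def by simp

lemma closed_loop_constraint:
  assumes "feasible (x s) (w s)"
  shows "(x s, u s) \<in> Z"
proof -
  have "feasible_for (x s) (wb_opt s) (v_opt s)"
    using optimizer(1)[OF assms] unfolding qp_optimal_def by blast
  then have "(pred_state Ac B L S (x s) (wb_opt s) (v_opt s) 0,
      K *v pred_state Ac B L S (x s) (wb_opt s) (v_opt s) 0 + L *v (mpow S 0 *v wb_opt s) + v_opt s 0) \<in> Z"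
    unfolding qp_feasible_for_def using N_pos by blast
  then show ?thesis using optimizer(2)[OF assms] by simp
qed

lemma closed_loop_feasible_Suc:
  assumes "feasible (x s) (w s)"
  shows "feasible (x (Suc s)) (w (Suc s))"
proof -
  have "feasible_for (x s) (wb_opt s) (v_opt s)"
    using optimizer(1)[OF assms] unfolding qp_optimal_def by blast
  from feasible_for_shift[OF this] show ?thesis
    unfolding qp_feasible_def x_Suc[OF assms] by blast
qed

lemma closed_loop_feasible_after: "feasible (x t) (w t) \<Longrightarrow> feasible (x (j + t)) (w (j + t))"
  by (induction j) (simp_all add: closed_loop_feasible_Suc)

definition opt_cost where
  "opt_cost s = cost (x s) (w s) (wb_opt s) (v_opt s)"

lemma opt_cost_decrease:
  assumes "feasible (x s) (w s)"
  shows "opt_cost (Suc s) + qnorm2 Q (x s - Pim *v wb_opt s) \<le> opt_cost s"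
proof -
  have "feasible_for (x s) (wb_opt s) (v_opt s)"
    using optimizer(1)[OF assms] unfolding qp_optimal_def by blast
  from feasible_for_shift[OF this]
  have "opt_cost (Suc s) \<le> cost (x (Suc s)) (w (Suc s)) (S *v wb_opt s) (shift_inputs N (v_opt s))"
    using optimizer(1)[OF closed_loop_feasible_Suc[OF assms]]
    unfolding opt_cost_def qp_optimal_def x_Suc[OF assms] by blast
  moreover have "cost (x (Suc s)) (w (Suc s)) (S *v wb_opt s) (shift_inputs N (v_opt s))
      + qnorm2 Q (x s - Pim *v wb_opt s) + qnorm2 R (v_opt s 0) = opt_cost s"
    unfolding opt_cost_def x_Suc[OF assms] exosystem by (rule cost_shift)
  ultimately show ?thesis
    using qnorm2_nonneg[OF R_pd, of "v_opt s 0"] by linarith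
qed

lemma deviation_tendsto_zero:
  assumes "feasible (x t) (w t)"
  shows "(\<lambda>j. x (j + t) - Pim *v wb_opt (j + t)) \<longlonglongrightarrow> 0"
proof -
  have lim: "(\<lambda>j. qnorm2 Q (x (j + t) - Pim *v wb_opt (j + t))) \<longlonglongrightarrow> 0"
    by (rule decrease_summable_tendsto_zero[where V = "\<lambda>j. opt_cost (j + t)"])
       (use opt_cost_decrease[OF closed_loop_feasible_after[OF assms]] in simp,
        simp add: opt_cost_def cost_nonneg, simp add: qnorm2_nonneg[OF Q_pd])
  obtain m where m: "m > 0" "\<And>e. m * (norm e)\<^sup>2 \<le> qnorm2 Q e"
    using sym_pos_def_qnorm2_ge[OF Q_pd] by blast
  show ?thesis
    by (rule tendsto_zero_if_norm_sq_le[OF m(1) m(2) lim])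
qed

lemma reference_steady:
  assumes "w t \<in> R_inf A B K L S \<epsilon> Z"
  shows "steady (w (j + t)) k \<in> Z_tight"
proof -
  have "\<exists>d. admissible (w (j + t)) d"
  proof (induction j)
    case 0
    from assms show ?case unfolding R_inf_def O_inf_iff by auto
  next
    case (Suc j)
    then obtain d where "admissible (w (j + t)) d" by blast
    from admissible_Suc[OF this] show ?case by (auto simp: exosystem)
  qed
  then show ?thesis using admissible_steady by blast
qed

lemma offset_tendsto_zero:
  assumes "feasible (x t) (w t)" and "w t \<in> R_inf A B K L S \<epsilon> Z"
  shows "(\<lambda>j. wb_opt (j + t) - w (j + t)) \<longlonglongrightarrow> 0"
proof -
  let ?z = "\<lambda>j. x (j + t) - Pim *v wb_opt (j + t)" and ?e = "\<lambda>j. wb_opt (j + t) - w (j + t)"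
  obtain \<eta> c where \<eta>: "\<eta> > 0" and bound: "\<And>x w wb v. optimal x w wb v \<Longrightarrow> (\<And>k. steady w k \<in> Z_tight)
      \<Longrightarrow> norm (x - Pim *v wb) < \<eta> \<Longrightarrow> qnorm2 T (wb - w) \<le> c * (norm (x - Pim *v wb))\<^sup>2"
    using optimal_offset_bound by blast
  have z: "(\<lambda>j. norm (?z j)) \<longlonglongrightarrow> 0"
    using tendsto_norm_zero[OF deviation_tendsto_zero[OF assms(1)]] .
  have "eventually (\<lambda>j. norm (?z j) < \<eta>) sequentially"
    using order_tendstoD(2)[OF z \<eta>] .
  then have "eventually (\<lambda>j. norm (qnorm2 T (?e j)) \<le> c * (norm (?z j))\<^sup>2) sequentially"
  proof (rule eventually_mono)
    fix j assume "norm (?z j) < \<eta>"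
    with bound[OF optimizer(1)[OF closed_loop_feasible_after[OF assms(1)]] reference_steady[OF assms(2)]]
    show "norm (qnorm2 T (?e j)) \<le> c * (norm (?z j))\<^sup>2"
      using qnorm2_T_nonneg by simp
  qed
  moreover have "(\<lambda>j. c * (norm (?z j))\<^sup>2) \<longlonglongrightarrow> 0"
    using tendsto_mult[OF tendsto_const tendsto_power[OF z, of 2], of c] by simp
  ultimately have lim: "(\<lambda>j. qnorm2 T (?e j)) \<longlonglongrightarrow> 0"
    by (rule Lim_null_comparison)
  obtain m where m: "m > 0" "\<And>e. m * (norm e)\<^sup>2 \<le> qnorm2 T e"
    using qnorm2_T_ge by blast
  show ?thesis
    by (rule tendsto_zero_if_norm_sq_le[OF m(1) m(2) lim])
qed

lemma tracking_error_tendsto_zero: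
  assumes "C ** Pim = Qe" and "feasible (x t) (w t)" and "w t \<in> R_inf A B K L S \<epsilon> Z"
  shows "(\<lambda>s. C *v x s - Qe *v w s) \<longlonglongrightarrow> 0"
proof -
  have "C *v x (j + t) - Qe *v w (j + t)
      = C *v (x (j + t) - Pim *v wb_opt (j + t)) + Qe *v (wb_opt (j + t) - w (j + t))" for j
    using assms(1) by (simp add: matrix_vector_mult_diff_distrib matrix_vector_mul_assoc)
  moreover have "(\<lambda>j. C *v (x (j + t) - Pim *v wb_opt (j + t)) + Qe *v (wb_opt (j + t) - w (j + t)))
      \<longlonglongrightarrow> C *v 0 + Qe *v 0"
    using bounded_linear.tendsto[OF matrix_vector_mul_bounded_linear deviation_tendsto_zero[OF assms(2)]]
      bounded_linear.tendsto[OF matrix_vector_mul_bounded_linear offset_tendsto_zero[OF assms(2,3)]]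
    by (rule tendsto_add)
  ultimately have "(\<lambda>j. C *v x (j + t) - Qe *v w (j + t)) \<longlonglongrightarrow> 0" by simp
  then show ?thesis by (rule LIMSEQ_offset)
qed

end

theorem theorem1:
  fixes A :: "real^'n^'n" and B :: "real^'m^'n" and C :: "real^'n^'q"
    and Z :: "((real^'n) \<times> (real^'m)) set" and K :: "real^'n^'m"
    and S :: "real^'p^'p" and Qe :: "real^'p^'q" and \<rho> :: nat
    and Pim :: "real^'p^'n" and \<Gamma> :: "real^'p^'m" and L :: "real^'p^'m"
    and \<epsilon> :: real and T0 T :: "real^'p^'p" and Q P :: "real^'n^'n" and R :: "real^'m^'m"
    and N :: nat
    and x :: "nat \<Rightarrow> real^'n" and u :: "nat \<Rightarrow> real^'m" and w :: "nat \<Rightarrow> real^'p"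
    and t :: nat
  assumes ctrb: "controllable A B"
    and Z_polytope: "polytope Z" and Z_int: "0 \<in> interior Z"
    and K_schur: "schur (A + B ** K)"
    and rho_pos: "\<rho> > 0" and S_periodic: "mpow S \<rho> = mat 1"
    and hautus: "\<And>mu. is_eigenvalue S mu \<Longrightarrow> rank (hautus_matrix A B C mu) = CARD('n + 'q)"
    and regulator1: "A ** Pim + B ** \<Gamma> = Pim ** S" and regulator2: "C ** Pim = Qe"
    and L_def: "L = \<Gamma> - K ** Pim"
    and eps: "0 < \<epsilon>" "\<epsilon> < 1"
    and T0_pd: "sym_pos_def T0"
    and T_def: "T = (\<Sum>k\<in>{1..\<rho>}. transpose (mpow S k) ** T0 ** mpow S k)"
    and Q_pd: "sym_pos_def Q" and R_pd: "sym_pos_def R"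
    and P_pd: "sym_pos_def P"
    and lyap: "transpose (A + B ** K) ** P ** (A + B ** K) - P + Q = 0"
    and horizon: "N \<ge> CARD('n)"
    and sys: "\<And>s. x (Suc s) = A *v x s + B *v u s"
    and exo: "\<And>s. w (Suc s) = S *v w s"
    and mpc: "\<And>s. qp_feasible A B K L S \<epsilon> Z N (x s) (w s) \<Longrightarrow>
        \<exists>wb0 v. qp_optimal A B K L S Pim T Q R P \<epsilon> Z N (x s) (w s) wb0 v
               \<and> u s = K *v x s + L *v wb0 + v 0"
    and feas: "qp_feasible A B K L S \<epsilon> Z N (x t) (w t)"
  shows "(x t, u t) \<in> Z
         \<and> qp_feasible A B K L S \<epsilon> Z N (x (Suc t)) (w (Suc t))
         \<and> (w t \<in> R_inf A B K L S \<epsilon> Z \<longrightarrow> (\<lambda>s. C *v x s - Qe *v w s) \<longlonglongrightarrow> 0)"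
proof -
  \<comment> \<open>The Hautus condition only guarantees that \<open>Pim\<close> and \<open>\<Gamma>\<close> exist; they are given here.\<close>
  interpret mpc_closed_loop A B K S Pim \<Gamma> L \<epsilon> Z N \<rho> T0 T Q P R x u w
    by unfold_locales
      (fact ctrb polytope_imp_convex[OF Z_polytope] polytope_imp_compact[OF Z_polytope] Z_int
        K_schur rho_pos S_periodic regulator1 L_def eps T0_pd T_def Q_pd R_pd P_pd lyap horizon
        sys exo mpc)+
  show ?thesis
    using closed_loop_constraint[OF feas] closed_loop_feasible_Suc[OF feas]
      tracking_error_tendsto_zero[OF regulator2 feas] by blast
qed

end
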